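(* Let $\underline{E}=(E_p)_{p\in\mathbb{P}}$ with $E_p\subseteq\overline{\mathbb{Z}_p}$ for every prime $p$, and assume $\underline{E}$ is locally bounded and closed (each $E_p$ is closed in $\overline{\mathbb{Z}_p}$). Let $R=\textnormal{Int}_{\mathbb{Q}}(\underline{E},\overline{\widehat{\mathbb{Z}}})$. If $M\subset R$ is a prime ideal with $M\cap\mathbb{Z}=p\mathbb{Z}$ for some prime $p$, then $M$ is a maximal ideal and there exists $\alpha\in E_p$ such that $M=\mathfrak{M}_{p,\alpha}:=\{f\in R\mid v_p(f(\alpha))>0\}$.
   Context: $\mathbb{P}$ is the set of primes; $\overline{\mathbb{Z}_p}$ is the integral closure of $\mathbb{Z}_p$ in a fixed algebraic closure $\overline{\mathbb{Q}_p}$ of $\mathbb{Q}_p$, with the topology given by $v_p$, the unique extension of the $p$-adic valuation to $\overline{\mathbb{Q}_p}$. For $E_p\subseteq\overline{\mathbb{Z}_p}$, $\textnormal{Int}_{\mathbb{Q}}(E_p,\overline{\mathbb{Z}_p})=\{f\in\mathbb{Q}[X]\mid f(E_p)\subseteq\overline{\mathbb{Z}_p}\}$, and $\textnormal{Int}_{\mathbb{Q}}(\underline{E},\overline{\widehat{\mathbb{Z}}})=\bigcap_p\textnormal{Int}_{\mathbb{Q}}(E_p,\overline{\mathbb{Z}_p})$ (components $E_p$ may be empty). $\underline{E}$ is locally bounded if for each prime $p$ the set $\{[\mathbb{Q}_p(\alpha):\mathbb{Q}_p]\mid\alpha\in E_p\}$ is bounded. *)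

theory Defs
  imports "HOL-Algebra.Ideal" "HOL-Computational_Algebra.Polynomial"
    "HOL-Library.Extended_Real" Complex_Main
begin

(* Model of (\<overline>{Q_p}, v_p): the underlying field is the complex numbers (abstractly
   isomorphic to \<overline>{Q_p} for every p), equipped with a valuation w satisfying the
   axioms below, which characterise (\<overline>{Q_p}, v_p) up to isomorphism. *)

definition is_valuation :: "(complex \<Rightarrow> ereal) \<Rightarrow> bool" where
  "is_valuation w \<longleftrightarrow>
     (\<forall>x. w x = \<infinity> \<longleftrightarrow> x = 0) \<and> (\<forall>x. w x \<noteq> -\<infinity>) \<and>
     (\<forall>x y. w (x * y) = w x + w y) \<and> (\<forall>x y. min (w x) (w y) \<le> w (x + y))"

definition padic_val_rat :: "nat \<Rightarrow> rat \<Rightarrow> int" where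
  "padic_val_rat p q = (case quotient_of q of (a, b) \<Rightarrow>
      int (multiplicity (int p) a) - int (multiplicity (int p) b))"

definition v_converges :: "(complex \<Rightarrow> ereal) \<Rightarrow> (nat \<Rightarrow> complex) \<Rightarrow> complex \<Rightarrow> bool" where
  "v_converges w x l \<longleftrightarrow> (\<forall>N::real. \<exists>n0. \<forall>n\<ge>n0. ereal N < w (x n - l))"

definition v_cauchy :: "(complex \<Rightarrow> ereal) \<Rightarrow> (nat \<Rightarrow> complex) \<Rightarrow> bool" where
  "v_cauchy w x \<longleftrightarrow> (\<forall>N::real. \<exists>n0. \<forall>m\<ge>n0. \<forall>n\<ge>n0. ereal N < w (x m - x n))"

(* closure of Q in the valued field: plays the role of Q_p *)
definition Qp_part :: "(complex \<Rightarrow> ereal) \<Rightarrow> complex set" where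
  "Qp_part w = {l. \<exists>q::nat \<Rightarrow> rat. v_converges w (\<lambda>n. of_rat (q n)) l}"

definition padic_closure_model :: "nat \<Rightarrow> (complex \<Rightarrow> ereal) \<Rightarrow> bool" where
  "padic_closure_model p w \<longleftrightarrow>
     is_valuation w \<and>
     (\<forall>q::rat. q \<noteq> 0 \<longrightarrow> w (of_rat q) = ereal (of_int (padic_val_rat p q))) \<and>
     (\<forall>x. (\<forall>n. x n \<in> Qp_part w) \<and> v_cauchy w x \<longrightarrow> (\<exists>l\<in>Qp_part w. v_converges w x l)) \<and>
     (\<forall>a. \<exists>f::complex poly. f \<noteq> 0 \<and> (\<forall>i. coeff f i \<in> Qp_part w) \<and> poly f a = 0)"

definition Zbar :: "(complex \<Rightarrow> ereal) \<Rightarrow> complex set" where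
  "Zbar w = {x. 0 \<le> w x}"

(* [Q_p(\<alpha>):Q_p] \<le> B for all \<alpha> \<in> E *)
definition locally_bounded_at :: "(complex \<Rightarrow> ereal) \<Rightarrow> complex set \<Rightarrow> bool" where
  "locally_bounded_at w E \<longleftrightarrow> (\<exists>B::nat. \<forall>a\<in>E. \<exists>f::complex poly.
      f \<noteq> 0 \<and> (\<forall>i. coeff f i \<in> Qp_part w) \<and> degree f \<le> B \<and> poly f a = 0)"

(* E closed in \<overline>{Z_p} (topology is metric, so sequential closedness) *)
definition closed_in_Zbar :: "(complex \<Rightarrow> ereal) \<Rightarrow> complex set \<Rightarrow> bool" where
  "closed_in_Zbar w E \<longleftrightarrow> (\<forall>x l. (\<forall>n. x n \<in> E) \<and> l \<in> Zbar w \<and> v_converges w x l \<longrightarrow> l \<in> E)"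

definition IntR :: "(nat \<Rightarrow> complex \<Rightarrow> ereal) \<Rightarrow> (nat \<Rightarrow> complex set) \<Rightarrow> rat poly set" where
  "IntR v E = {f. \<forall>p. prime p \<longrightarrow> (\<forall>a\<in>E p. 0 \<le> v p (poly (map_poly of_rat f) a))}"

definition IntRing :: "(nat \<Rightarrow> complex \<Rightarrow> ereal) \<Rightarrow> (nat \<Rightarrow> complex set) \<Rightarrow> rat poly ring" where
  "IntRing v E = \<lparr>carrier = IntR v E, monoid.mult = (*), one = 1, zero = 0, add = (+)\<rparr>"

end

theory Submission
  imports Defs "HOL-Library.Countable" "HOL-Library.Diagonal_Subsequence" "HOL-Number_Theory.Cong"
    "HOL-Computational_Algebra.Fundamental_Theorem_Algebra"
begin

(* Let B bound the degrees over Q_p of the points of E_p and put N = (p^B)!. A positive valuation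
   at such a point is at least 1/B, so if f in R has positive valuation at every point of E_p,
   then f^B/p still lies in R; thus f^B lies in pR, a subset of M, and f lies in M. The residue
   fields of the points of E_p have at most p^B elements, so this applies to f (f^N - 1), and for
   f outside M primality puts f^N - 1 into M: M is maximal. For every finite subset F of M some
   point of E_p gives all f in F positive valuation, since otherwise the product of the 1 - f^N
   (f in F) would lie in M together with 1 minus it. Enumerating the countable ideal M, these
   points accumulate at some alpha (bounded-degree points of the valuation ring form a
   sequentially compact set), alpha lies in E_p as E_p is closed, and continuity of polynomials
   gives M = M_(p,alpha). *)

section \<open>Valuations on the complex numbers\<close>

locale valuation =
  fixes w :: "complex \<Rightarrow> ereal"
  assumes is_valuation: "is_valuation w"
begin

lemma val_eq_infinity_iff [simp]: "w x = \<infinity> \<longleftrightarrow> x = 0"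
  using is_valuation unfolding is_valuation_def by auto

lemma val_zero [simp]: "w 0 = \<infinity>"
  by simp

lemma val_not_minfinity [simp]: "w x \<noteq> -\<infinity>"
  using is_valuation unfolding is_valuation_def by auto

lemma val_mult: "w (x * y) = w x + w y"
  using is_valuation unfolding is_valuation_def by auto

lemma val_add_ge_min: "min (w x) (w y) \<le> w (x + y)"
  using is_valuation unfolding is_valuation_def by auto

lemma val_real: "x \<noteq> 0 \<Longrightarrow> \<exists>r. w x = ereal r"
  by (cases "w x") auto

lemma val_one [simp]: "w 1 = 0"
proof -
  obtain r where "w 1 = ereal r"
    using val_real[of 1] by auto
  with val_mult[of 1 1] show ?thesis
    by (simp add: zero_ereal_def)
qed

lemma val_minus_one [simp]: "w (-1) = 0"
proof -
  obtain r where "w (-1) = ereal r"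
    using val_real[of "-1"] by auto
  with val_mult[of "-1" "-1"] show ?thesis
    by (simp add: zero_ereal_def)
qed

lemma val_uminus [simp]: "w (- x) = w x"
  using val_mult[of "-1" x] by simp

lemma val_diff_commute: "w (x - y) = w (y - x)"
  by (metis minus_diff_eq val_uminus)

lemma val_inverse: "x \<noteq> 0 \<Longrightarrow> w (inverse x) = - w x"
  using val_mult[of x "inverse x"] val_real[of x] val_real[of "inverse x"]
  by (auto simp: zero_ereal_def)

lemma val_add_ge: "a \<le> w x \<Longrightarrow> a \<le> w y \<Longrightarrow> a \<le> w (x + y)"
  using val_add_ge_min[of x y] by (metis min.bounded_iff order_trans)

lemma val_diff_ge: "a \<le> w x \<Longrightarrow> a \<le> w y \<Longrightarrow> a \<le> w (x - y)"
  using val_add_ge[of a x "- y"] by simp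

lemma val_add_gt: "a < w x \<Longrightarrow> a < w y \<Longrightarrow> a < w (x + y)"
  using val_add_ge_min[of x y] by (metis min_less_iff_conj order_less_le_trans)

lemma val_diff_gt: "a < w x \<Longrightarrow> a < w y \<Longrightarrow> a < w (x - y)"
  using val_add_gt[of a x "- y"] by simp

lemma val_add_eq_left:
  assumes "w x < w y"
  shows "w (x + y) = w x"
proof (rule antisym)
  show "w x \<le> w (x + y)"
    using val_add_ge_min[of x y] assms by simp
  show "w (x + y) \<le> w x"
  proof (rule ccontr)
    assume "\<not> w (x + y) \<le> w x"
    then have "w x < w ((x + y) - y)"
      using assms by (intro val_diff_gt) auto
    then show False by simp
  qed
qed

lemma val_sum_ge: "(\<And>i. i \<in> A \<Longrightarrow> a \<le> w (f i)) \<Longrightarrow> a \<le> w (\<Sum>i\<in>A. f i)"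
  by (induction A rule: infinite_finite_induct) (auto intro: val_add_ge)

lemma val_sum_gt:
  "finite A \<Longrightarrow> a \<noteq> \<infinity> \<Longrightarrow> (\<And>i. i \<in> A \<Longrightarrow> a < w (f i)) \<Longrightarrow> a < w (\<Sum>i\<in>A. f i)"
  by (induction A rule: finite_induct) (auto intro: val_add_gt)

lemma val_sum_eq_strict_min:
  assumes "finite A" "i \<in> A" "\<And>j. j \<in> A \<Longrightarrow> j \<noteq> i \<Longrightarrow> w (f i) < w (f j)"
  shows "w (\<Sum>j\<in>A. f j) = w (f i)"
proof (cases "A - {i} = {}")
  case True
  then have "A = {i}"
    using assms(2) by auto
  then show ?thesis by simp
next
  case False
  then obtain j where "j \<in> A" "j \<noteq> i"
    by auto
  then have "w (f i) \<noteq> \<infinity>"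
    using assms(3) by fastforce
  then have "w (f i) < w (\<Sum>j\<in>A - {i}. f j)"
    using assms by (intro val_sum_gt) auto
  then show ?thesis
    using assms by (simp add: sum.remove val_add_eq_left)
qed

lemma val_prod: "finite A \<Longrightarrow> w (\<Prod>i\<in>A. f i) = (\<Sum>i\<in>A. w (f i))"
  by (induction A rule: finite_induct) (auto simp: val_mult)

lemma val_power: "w (x ^ n) = ereal (real n) * w x"
proof (induction n)
  case (Suc n)
  then show ?case
    by (cases "w x") (auto simp: val_mult algebra_simps)
qed simp

lemma val_power_nonneg: "0 \<le> w x \<Longrightarrow> 0 \<le> w (x ^ n)"
  by (simp add: val_power)

lemma val_power_pos: "0 < w x \<Longrightarrow> 0 < n \<Longrightarrow> 0 < w (x ^ n)"
  by (cases "w x") (auto simp: val_power ereal_zero_less_0_iff)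

end

section \<open>Convergence\<close>

lemma ereal_add_less: "ereal c \<le> a \<Longrightarrow> ereal d < b \<Longrightarrow> ereal (c + d) < a + b"
  by (cases a; cases b) auto

lemma v_converges_eventually:
  "v_converges w x l \<longleftrightarrow> (\<forall>N. eventually (\<lambda>n. ereal N < w (x n - l)) sequentially)"
  unfolding v_converges_def eventually_sequentially ..

lemma v_converges_subseq:
  assumes "v_converges w x l" "strict_mono r"
  shows "v_converges w (x \<circ> r) l"
  unfolding v_converges_eventually comp_def
proof
  fix N
  have "eventually (\<lambda>n. ereal N < w (x n - l)) sequentially"
    using assms(1) by (simp add: v_converges_eventually)
  then show "eventually (\<lambda>n. ereal N < w (x (r n) - l)) sequentially"
    using filterlim_subseq[OF assms(2)] unfolding filterlim_iff by blast
qed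

context valuation
begin

lemma v_converges_const: "v_converges w (\<lambda>n. c) c"
  by (simp add: v_converges_def)

lemma v_converges_add:
  assumes "v_converges w x l" "v_converges w y m"
  shows "v_converges w (\<lambda>n. x n + y n) (l + m)"
  unfolding v_converges_eventually
proof
  fix N
  from assms have "eventually (\<lambda>n. ereal N < w (x n - l)) sequentially"
    "eventually (\<lambda>n. ereal N < w (y n - m)) sequentially"
    by (auto simp: v_converges_eventually)
  then show "eventually (\<lambda>n. ereal N < w (x n + y n - (l + m))) sequentially"
    by eventually_elim (metis val_add_gt add_diff_add)
qed

lemma v_converges_uminus: "v_converges w x l \<Longrightarrow> v_converges w (\<lambda>n. - x n) (- l)"
  unfolding v_converges_def by (metis minus_diff_eq minus_diff_minus val_uminus)

lemma v_converges_bounded_below: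
  assumes "v_converges w x l"
  obtains c where "eventually (\<lambda>n. ereal c \<le> w (x n)) sequentially"
proof -
  obtain r where r: "ereal r \<le> w l"
  proof (cases "l = 0")
    case False
    then show ?thesis
      using that val_real by force
  qed (use that[of 0] in simp)
  have "eventually (\<lambda>n. ereal 0 < w (x n - l)) sequentially"
    using assms by (simp add: v_converges_eventually)
  then have "eventually (\<lambda>n. ereal (min r 0) \<le> w (x n)) sequentially"
  proof eventually_elim
    case (elim n)
    have "ereal (min r 0) \<le> w (x n - l)"
      using elim by (metis less_imp_le min.cobounded2 order_trans ereal_less_eq(3))
    then have "ereal (min r 0) \<le> w ((x n - l) + l)"
      using r by (intro val_add_ge) (auto intro: order_trans[rotated])
    then show ?case by simp
  qed
  then show ?thesis by (rule that)
qed

lemma v_converges_mult: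
  assumes x: "v_converges w x l" and y: "v_converges w y m"
  shows "v_converges w (\<lambda>n. x n * y n) (l * m)"
  unfolding v_converges_eventually
proof
  fix N
  obtain c where "eventually (\<lambda>n. ereal c \<le> w (x n)) sequentially"
    using x by (rule v_converges_bounded_below)
  moreover have "eventually (\<lambda>n. ereal (N - c) < w (y n - m)) sequentially"
    using y by (simp add: v_converges_eventually)
  ultimately have "eventually (\<lambda>n. ereal N < w (x n * (y n - m))) sequentially"
  proof eventually_elim
    case (elim n)
    from ereal_add_less[OF elim] show ?case
      by (simp add: val_mult)
  qed
  moreover have "eventually (\<lambda>n. ereal N < w (m * (x n - l))) sequentially"
  proof (cases "m = 0")
    case False
    then obtain d where d: "w m = ereal d"
      using val_real by blast
    have "eventually (\<lambda>n. ereal (N - d) < w (x n - l)) sequentially"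
      using x by (simp add: v_converges_eventually)
    then show ?thesis
    proof eventually_elim
      case (elim n)
      from ereal_add_less[OF _ elim, of d "w m"] show ?case
        by (simp add: d val_mult)
    qed
  qed simp
  ultimately show "eventually (\<lambda>n. ereal N < w (x n * y n - l * m)) sequentially"
    by eventually_elim (auto dest: val_add_gt simp: algebra_simps)
qed

lemma v_converges_eventually_val:
  assumes "v_converges w x l" "l \<noteq> 0"
  shows "eventually (\<lambda>n. w (x n) = w l) sequentially"
proof -
  obtain r where r: "w l = ereal r"
    using val_real assms(2) by blast
  have "eventually (\<lambda>n. ereal r < w (x n - l)) sequentially"
    using assms(1) by (simp add: v_converges_eventually)
  then show ?thesis
    by eventually_elim (metis r val_add_eq_left add.commute diff_add_cancel)
qed

lemma v_converges_inverse:
  assumes x: "v_converges w x l" and l: "l \<noteq> 0"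
  shows "v_converges w (\<lambda>n. inverse (x n)) (inverse l)"
  unfolding v_converges_eventually
proof
  fix N
  obtain r where r: "w l = ereal r"
    using val_real l by blast
  have "eventually (\<lambda>n. w (x n) = w l) sequentially"
    using x l by (rule v_converges_eventually_val)
  moreover have "eventually (\<lambda>n. ereal (N + 2 * r) < w (x n - l)) sequentially"
    using x by (simp add: v_converges_eventually)
  ultimately show "eventually (\<lambda>n. ereal N < w (inverse (x n) - inverse l)) sequentially"
  proof eventually_elim
    case (elim n)
    then have "x n \<noteq> 0"
      using l by (metis val_eq_infinity_iff)
    then have "inverse (x n) - inverse l = (l - x n) * inverse (x n) * inverse l"
      using l by (simp add: field_simps)
    then have "w (inverse (x n) - inverse l) = w (x n - l) + ereal (- 2 * r)"
      using \<open>x n \<noteq> 0\<close> l elim(1) r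
      by (cases "w (x n - l)") (simp_all add: val_mult val_inverse val_diff_commute[of l])
    then show ?case
      using elim(2) by (cases "w (x n - l)") auto
  qed
qed

lemma v_converges_nonneg:
  assumes "v_converges w x l" "\<And>n. 0 \<le> w (x n)"
  shows "0 \<le> w l"
proof -
  obtain n where "0 < w (x n - l)"
    using assms(1) unfolding v_converges_def by (metis zero_ereal_def order_refl)
  then show ?thesis
    using val_diff_ge[of 0 "x n" "x n - l"] assms(2)[of n] by simp
qed

end

section \<open>The field \<open>Q\<^sub>p\<close> inside the model\<close>

locale padic = valuation +
  fixes p :: nat
  assumes prime_p: "prime p" and model: "padic_closure_model p w"
begin

abbreviation Qp :: "complex set" where
  "Qp \<equiv> Qp_part w"

lemma prime_int_p: "prime (int p)"
  using prime_p by simp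

lemma val_of_rat: "q \<noteq> 0 \<Longrightarrow> w (of_rat q) = ereal (of_int (padic_val_rat p q))"
  using model unfolding padic_closure_model_def by auto

lemma val_of_int: "n \<noteq> 0 \<Longrightarrow> w (of_int n) = ereal (of_nat (multiplicity (int p) n))"
  using val_of_rat[of "of_int n"] by (simp add: padic_val_rat_def multiplicity_one)

lemma val_of_int_nonneg: "0 \<le> w (of_int n)"
  by (cases "n = 0") (auto simp: val_of_int)

lemma val_of_int_ge: "int p ^ k dvd n \<Longrightarrow> ereal (real k) \<le> w (of_int n)"
  using prime_int_p
  by (cases "n = 0") (auto simp: val_of_int intro!: multiplicity_geI dest: prime_gt_1_int)

lemma val_of_int_pos: "int p dvd n \<Longrightarrow> 0 < w (of_int n)"
  using val_of_int_ge[of 1 n] by (cases "w (of_int n)") auto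

lemma val_of_int_eq_0: "\<not> int p dvd n \<Longrightarrow> w (of_int n) = 0"
  using prime_int_p
  by (cases "n = 0") (auto simp: val_of_int not_dvd_imp_multiplicity_0 zero_ereal_def)

lemma val_p: "w (of_nat p) = 1"
  using val_of_int[of "int p"] prime_int_p prime_gt_0_nat[OF prime_p]
  by (simp add: multiplicity_self one_ereal_def)

lemma val_of_rat_approx_int:
  assumes "0 \<le> w (of_rat q)"
  shows "\<exists>m::int. ereal (real k) \<le> w (of_rat q - of_int m)"
proof -
  obtain a b where ab: "quotient_of q = (a, b)"
    by (cases "quotient_of q")
  then have "b > 0" "coprime a b"
    by (auto intro: quotient_of_denom_pos quotient_of_coprime)
  have q: "(of_rat q :: complex) = of_int a / of_int b"
    by (simp add: quotient_of_div[OF ab] of_rat_divide)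
  have b_unit: "\<not> int p dvd b"
  proof
    assume "int p dvd b"
    with \<open>coprime a b\<close> have "\<not> int p dvd a"
      using prime_int_p coprime_common_divisor not_prime_unit by blast
    then have "w (of_rat q) = - w (of_int b)"
      using \<open>b > 0\<close> by (simp add: q divide_inverse val_mult val_inverse val_of_int_eq_0)
    moreover have "0 < w (of_int b)"
      using \<open>int p dvd b\<close> by (rule val_of_int_pos)
    ultimately show False
      using assms by (simp add: ereal_uminus_le_reorder)
  qed
  then have "coprime b (int p ^ k)"
    using prime_imp_coprime[OF prime_int_p] by (simp add: coprime_commute)
  then obtain u where "[b * u = 1] (mod int p ^ k)"
    using cong_solve_coprime_int by blast
  then have "int p ^ k dvd (1 - b * u)"
    by (metis cong_iff_dvd_diff cong_sym)
  have "of_rat q - of_int (a * u) = of_int a * of_int (1 - b * u) * (inverse (of_int b) :: complex)"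
    using \<open>b > 0\<close> by (simp add: q field_simps)
  also have "ereal (real k) \<le> w \<dots>"
  proof -
    have "0 + ereal (real k) \<le> w (of_int a) + w (of_int (1 - b * u))"
      using val_of_int_nonneg val_of_int_ge[OF \<open>int p ^ k dvd (1 - b * u)\<close>] by (rule add_mono)
    then show ?thesis
      using b_unit \<open>b > 0\<close> by (simp add: val_mult val_inverse val_of_int_eq_0)
  qed
  finally show ?thesis ..
qed

lemma Qp_of_rat [simp]: "of_rat q \<in> Qp"
  unfolding Qp_part_def using v_converges_const by (auto intro: exI[of _ "\<lambda>n. q"])

lemma Qp_0 [simp]: "0 \<in> Qp" and Qp_1 [simp]: "1 \<in> Qp"
  using Qp_of_rat[of 0] Qp_of_rat[of 1] by simp_all

lemma Qp_add: "x \<in> Qp \<Longrightarrow> y \<in> Qp \<Longrightarrow> x + y \<in> Qp"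
  unfolding Qp_part_def using v_converges_add[of "\<lambda>n. of_rat (_ n)" x]
  by (fastforce simp flip: of_rat_add)

lemma Qp_uminus: "x \<in> Qp \<Longrightarrow> - x \<in> Qp"
  unfolding Qp_part_def using v_converges_uminus[of "\<lambda>n. of_rat (_ n)" x]
  by (fastforce simp flip: of_rat_minus)

lemma Qp_diff: "x \<in> Qp \<Longrightarrow> y \<in> Qp \<Longrightarrow> x - y \<in> Qp"
  using Qp_add[OF _ Qp_uminus] by fastforce

lemma Qp_mult: "x \<in> Qp \<Longrightarrow> y \<in> Qp \<Longrightarrow> x * y \<in> Qp"
  unfolding Qp_part_def using v_converges_mult[of "\<lambda>n. of_rat (_ n)" x]
  by (fastforce simp flip: of_rat_mult)

lemma Qp_inverse: "x \<in> Qp \<Longrightarrow> inverse x \<in> Qp"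
  unfolding Qp_part_def using v_converges_inverse[of "\<lambda>n. of_rat (_ n)" x]
  by (cases "x = 0") (fastforce simp flip: of_rat_inverse)+

lemma Qp_divide: "x \<in> Qp \<Longrightarrow> y \<in> Qp \<Longrightarrow> x / y \<in> Qp"
  by (simp add: divide_inverse Qp_mult Qp_inverse)

lemma Qp_sum: "(\<And>i. i \<in> A \<Longrightarrow> f i \<in> Qp) \<Longrightarrow> (\<Sum>i\<in>A. f i) \<in> Qp"
  by (induction A rule: infinite_finite_induct) (auto intro: Qp_add)

lemma Qp_complete: "(\<And>n. x n \<in> Qp) \<Longrightarrow> v_cauchy w x \<Longrightarrow> \<exists>l\<in>Qp. v_converges w x l"
  using model unfolding padic_closure_model_def by blast

lemma val_Qp_integer:
  assumes "x \<in> Qp" "x \<noteq> 0"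
  obtains n :: int where "w x = ereal n"
proof -
  obtain q where q: "v_converges w (\<lambda>n. of_rat (q n)) x"
    using assms(1) unfolding Qp_part_def by blast
  obtain n where n: "w (of_rat (q n)) = w x"
    using eventually_happens'[OF _ v_converges_eventually_val[OF q assms(2)]] by auto
  with assms(2) have "q n \<noteq> 0"
    by (metis of_rat_0 val_eq_infinity_iff)
  with n show ?thesis
    using that val_of_rat by metis
qed

lemma Qp_residue:
  assumes "x \<in> Qp" "0 \<le> w x"
  obtains m where "m \<in> {0..<int p ^ k}" "ereal (real k) \<le> w (x - of_int m)"
proof -
  obtain q where "v_converges w (\<lambda>n. of_rat (q n)) x"
    using assms(1) unfolding Qp_part_def by blast
  then obtain n where n: "ereal (real k) < w (of_rat (q n) - x)"
    unfolding v_converges_def by blast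
  then have "0 \<le> w (of_rat (q n) - x)"
    by (metis less_imp_le order_trans ereal_less_eq(5) of_nat_0_le_iff)
  then have "0 \<le> w ((of_rat (q n) - x) + x)"
    using assms(2) by (rule val_add_ge)
  then obtain m0 where m0: "ereal (real k) \<le> w (of_rat (q n) - of_int m0)"
    using val_of_rat_approx_int by auto
  define m where "m = m0 mod int p ^ k"
  have "ereal (real k) \<le> w ((of_rat (q n) - of_int m0) - (of_rat (q n) - x))"
    using m0 less_imp_le[OF n] by (rule val_diff_ge)
  moreover have "ereal (real k) \<le> w (of_int (m0 - m))"
    by (rule val_of_int_ge) (simp add: m_def minus_mod_eq_mult_div)
  ultimately have "ereal (real k) \<le> w ((of_rat (q n) - of_int m0) - (of_rat (q n) - x) + of_int (m0 - m))"
    by (rule val_add_ge)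
  moreover have "m \<in> {0..<int p ^ k}"
    using prime_gt_0_nat[OF prime_p] by (simp add: m_def)
  ultimately show ?thesis
    by (intro that[of m]) simp_all
qed

end

section \<open>Elements of bounded degree over \<open>Q\<^sub>p\<close>\<close>

definition qpoly :: "rat poly \<Rightarrow> complex \<Rightarrow> complex" where
  "qpoly f a = poly (map_poly of_rat f) a"

lemma qpoly_add [simp]: "qpoly (f + g) a = qpoly f a + qpoly g a"
proof -
  have "map_poly (of_rat :: rat \<Rightarrow> complex) (f + g) = map_poly of_rat f + map_poly of_rat g"
    by (rule poly_eqI) (simp add: coeff_map_poly of_rat_add)
  then show ?thesis by (simp add: qpoly_def)
qed

lemma qpoly_mult [simp]: "qpoly (f * g) a = qpoly f a * qpoly g a"
proof -
  have "map_poly (of_rat :: rat \<Rightarrow> complex) (f * g) = map_poly of_rat f * map_poly of_rat g"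
    by (rule poly_eqI) (simp add: coeff_map_poly coeff_mult of_rat_sum of_rat_mult)
  then show ?thesis by (simp add: qpoly_def)
qed

lemma qpoly_const [simp]: "qpoly [:c:] a = of_rat c"
  by (cases "c = 0") (auto simp: qpoly_def map_poly_pCons)

lemma qpoly_1 [simp]: "qpoly 1 a = 1"
  by (simp add: qpoly_def)

lemma qpoly_smult: "qpoly (smult c f) a = of_rat c * qpoly f a"
  using qpoly_mult[of "[:c:]" f a] by simp

lemma qpoly_uminus [simp]: "qpoly (- f) a = - qpoly f a"
  using qpoly_mult[of "[:-1:]" f a] by simp

lemma qpoly_diff [simp]: "qpoly (f - g) a = qpoly f a - qpoly g a"
  using qpoly_add[of f "- g" a] by simp

lemma qpoly_power [simp]: "qpoly (f ^ n) a = qpoly f a ^ n"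
  by (induction n) auto

lemma qpoly_prod: "qpoly (\<Prod>i\<in>A. f i) a = (\<Prod>i\<in>A. qpoly (f i) a)"
  by (induction A rule: infinite_finite_induct) auto

lemma qpoly_altdef: "qpoly f a = (\<Sum>i\<le>degree f. of_rat (coeff f i) * a ^ i)"
  by (simp add: qpoly_def poly_altdef degree_map_poly coeff_map_poly)

definition algebraic_deg_le :: "complex set \<Rightarrow> nat \<Rightarrow> complex \<Rightarrow> bool" where
  "algebraic_deg_le F B y \<longleftrightarrow> (\<exists>c. (\<forall>i. c i \<in> F) \<and> (\<exists>i\<le>B. c i \<noteq> 0) \<and> (\<Sum>i\<le>B. c i * y ^ i) = 0)"

lemma algebraic_deg_leI:
  assumes "f \<noteq> 0" "\<forall>i. coeff f i \<in> F" "degree f \<le> B" "poly f a = 0"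
  shows "algebraic_deg_le F B a"
proof -
  have "(\<Sum>i\<le>B. coeff f i * a ^ i) = poly f a"
    using assms(3) by (auto simp: poly_altdef coeff_eq_0 intro!: sum.mono_neutral_right le_degree)
  then show ?thesis
    unfolding algebraic_deg_le_def using assms
    by (intro exI[of _ "coeff f"]) (auto intro!: exI[of _ "degree f"])
qed

lemma locally_bounded_at_algebraic_deg_le:
  assumes "locally_bounded_at w E"
  obtains B where "0 < B" "\<And>a. a \<in> E \<Longrightarrow> algebraic_deg_le (Qp_part w) B a"
proof -
  obtain B where "\<forall>a\<in>E. \<exists>f::complex poly.
      f \<noteq> 0 \<and> (\<forall>i. coeff f i \<in> Qp_part w) \<and> degree f \<le> B \<and> poly f a = 0"
    using assms unfolding locally_bounded_at_def by blast
  then have "\<And>a. a \<in> E \<Longrightarrow> algebraic_deg_le (Qp_part w) (Suc B) a"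
    using algebraic_deg_leI le_SucI by meson
  then show ?thesis
    using that by blast
qed

lemma int_translates_distinct:
  fixes r :: real
  assumes "0 < r" "real B * r < 1" "i \<le> B" "j \<le> B" "i \<noteq> j"
  shows "real_of_int a + real i * r \<noteq> real_of_int b + real j * r"
proof
  assume "real_of_int a + real i * r = real_of_int b + real j * r"
  then have "real_of_int (b - a) = (real i - real j) * r"
    by (simp add: algebra_simps)
  then have "\<bar>real_of_int (b - a)\<bar> = \<bar>real i - real j\<bar> * r"
    using assms(1) by (simp add: abs_mult)
  moreover have "1 \<le> \<bar>real i - real j\<bar>" "\<bar>real i - real j\<bar> \<le> real B"
    using assms(3-5) by auto
  ultimately have "r \<le> \<bar>real_of_int (b - a)\<bar>" "\<bar>real_of_int (b - a)\<bar> \<le> real B * r"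
    using mult_right_mono[of 1 _ r] mult_right_mono[of _ "real B" r] assms(1) by auto
  with assms(1,2) have "b - a = 0" "r \<le> \<bar>real_of_int (b - a)\<bar>"
    by linarith+
  with assms(1) show False
    by simp
qed

context padic
begin

lemma algebraic_deg_le_normalized:
  assumes "algebraic_deg_le Qp B y"
  obtains c k where "\<And>i. c i \<in> Qp" "\<And>i. 0 \<le> w (c i)" "k \<le> B" "c k = 1"
    "(\<Sum>i\<le>B. c i * y ^ i) = 0"
proof -
  obtain c where c: "\<forall>i. c i \<in> Qp" "\<exists>i\<le>B. c i \<noteq> 0" "(\<Sum>i\<le>B. c i * y ^ i) = 0"
    using assms unfolding algebraic_deg_le_def by blast
  define I where "I = {i. i \<le> B \<and> c i \<noteq> 0}"
  have I: "finite I" "I \<noteq> {}"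
    using c(2) by (auto simp: I_def)
  define k where "k = arg_min_on (\<lambda>i. w (c i)) I"
  have "k \<in> I" and k_min: "\<And>i. i \<in> I \<Longrightarrow> w (c k) \<le> w (c i)"
    unfolding k_def using arg_min_if_finite[OF I, of "\<lambda>i. w (c i)"] by (auto simp: not_less)
  then have "c k \<noteq> 0" "k \<le> B"
    by (auto simp: I_def)
  define c' where "c' i = (if i \<le> B then c i / c k else 0)" for i
  have "0 \<le> w (c' i)" for i
  proof (cases "i \<in> I")
    case True
    obtain r where "w (c k) = ereal r"
      using val_real \<open>c k \<noteq> 0\<close> by blast
    with k_min[OF True] \<open>c k \<noteq> 0\<close> True show ?thesis
      by (cases "w (c i)") (auto simp: c'_def I_def divide_inverse val_mult val_inverse)
  qed (auto simp: c'_def I_def)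
  moreover have "(\<Sum>i\<le>B. c' i * y ^ i) = (\<Sum>i\<le>B. c i * y ^ i) / c k"
    by (simp add: c'_def sum_divide_distrib)
  ultimately show ?thesis
    using c \<open>c k \<noteq> 0\<close> \<open>k \<le> B\<close> by (intro that[of c' k]) (auto simp: c'_def Qp_divide)
qed

lemma val_ge_inverse_degree:
  assumes alg: "algebraic_deg_le Qp B y" and "0 < B" and "0 < w y"
  shows "ereal (1 / real B) \<le> w y"
proof (rule ccontr)
  assume "\<not> ?thesis"
  then obtain r where r: "w y = ereal r" "0 < r" "r < 1 / real B"
    using \<open>0 < w y\<close> by (cases "w y") auto
  obtain c where c: "\<forall>i. c i \<in> Qp" "\<exists>i\<le>B. c i \<noteq> 0" "(\<Sum>i\<le>B. c i * y ^ i) = 0"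
    using alg unfolding algebraic_deg_le_def by blast
  define I where "I = {i. i \<le> B \<and> c i \<noteq> 0}"
  have I: "finite I" "I \<noteq> {}"
    using c(2) by (auto simp: I_def)
  have "\<forall>i\<in>I. \<exists>n::int. w (c i) = ereal n"
    using c(1) by (auto simp: I_def elim: val_Qp_integer)
  then obtain n :: "nat \<Rightarrow> int" where "\<And>i. i \<in> I \<Longrightarrow> w (c i) = ereal (n i)"
    by metis
  then have val_term: "w (c i * y ^ i) = ereal (n i + real i * r)" if "i \<in> I" for i
    using that r by (simp add: val_mult val_power)
  have distinct: "n i + real i * r \<noteq> n j + real j * r" if "i \<in> I" "j \<in> I" "i \<noteq> j" for i j
    using r that \<open>0 < B\<close> by (intro int_translates_distinct) (auto simp: I_def field_simps)
  define i0 where "i0 = arg_min_on (\<lambda>i. n i + real i * r) I"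
  have "i0 \<in> I" and i0_min: "\<And>i. i \<in> I \<Longrightarrow> n i0 + real i0 * r \<le> n i + real i * r"
    unfolding i0_def using arg_min_if_finite[OF I, of "\<lambda>i. n i + real i * r"]
    by (auto simp: not_less)
  have "w (\<Sum>i\<le>B. c i * y ^ i) = w (c i0 * y ^ i0)"
  proof (rule val_sum_eq_strict_min)
    fix i assume "i \<in> {..B}" "i \<noteq> i0"
    then show "w (c i0 * y ^ i0) < w (c i * y ^ i)"
      using \<open>i0 \<in> I\<close> i0_min[of i] distinct[of i0 i] val_term
      by (cases "i \<in> I") (auto simp: I_def)
  qed (use \<open>i0 \<in> I\<close> I_def in auto)
  then show False
    using c(3) \<open>i0 \<in> I\<close> val_term by simp
qed

end

definition span_over :: "complex set \<Rightarrow> nat \<Rightarrow> (nat \<Rightarrow> complex) \<Rightarrow> complex set" where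
  "span_over F d u = {\<Sum>i<d. a i * u i | a. \<forall>i. a i \<in> F}"

context padic
begin

lemma span_over_zero: "0 \<in> span_over Qp d u"
  unfolding span_over_def by (auto intro!: exI[of _ "\<lambda>_. 0"])

lemma span_over_add:
  assumes "x \<in> span_over Qp d u" "y \<in> span_over Qp d u"
  shows "x + y \<in> span_over Qp d u"
proof -
  obtain a b where "\<forall>i. a i \<in> Qp" "x = (\<Sum>i<d. a i * u i)" "\<forall>i. b i \<in> Qp" "y = (\<Sum>i<d. b i * u i)"
    using assms unfolding span_over_def by blast
  then show ?thesis
    unfolding span_over_def
    by (auto intro!: exI[of _ "\<lambda>i. a i + b i"] Qp_add simp: sum.distrib algebra_simps)
qed

lemma span_over_scale:
  assumes "k \<in> Qp" "x \<in> span_over Qp d u"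
  shows "k * x \<in> span_over Qp d u"
proof -
  obtain a where "\<forall>i. a i \<in> Qp" "x = (\<Sum>i<d. a i * u i)"
    using assms unfolding span_over_def by blast
  then show ?thesis
    unfolding span_over_def using assms(1)
    by (auto intro!: exI[of _ "\<lambda>i. k * a i"] Qp_mult simp: sum_distrib_left algebra_simps)
qed

lemma span_over_sum:
  "(\<And>i. i \<in> A \<Longrightarrow> f i \<in> span_over Qp d u) \<Longrightarrow> (\<Sum>i\<in>A. f i) \<in> span_over Qp d u"
  by (induction A rule: infinite_finite_induct) (auto intro: span_over_zero span_over_add)

lemma span_over_generator: "i < d \<Longrightarrow> u i \<in> span_over Qp d u"
proof -
  have "(\<Sum>j<d. (if j = i then 1 else 0) * u j) = (\<Sum>j<d. if j = i then u j else 0)"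
    by (intro sum.cong) auto
  also assume "i < d"
  then have "(\<Sum>j<d. if j = i then u j else 0) = u i"
    by simp
  finally show ?thesis
    unfolding span_over_def by (auto intro!: exI[of _ "\<lambda>j. if j = i then 1 else 0"])
qed

lemma span_over_eliminate:
  assumes "\<forall>i. a i \<in> Qp" "\<forall>i. b i \<in> Qp" "b d \<noteq> 0"
  shows "(\<Sum>i<Suc d. a i * u i) - a d / b d * (\<Sum>i<Suc d. b i * u i) \<in> span_over Qp d u"
proof -
  have "(\<Sum>i<Suc d. a i * u i) - a d / b d * (\<Sum>i<Suc d. b i * u i)
      = (\<Sum>i<Suc d. (a i - a d / b d * b i) * u i)"
    by (simp add: sum_distrib_left sum_subtractf left_diff_distrib mult.assoc del: sum.lessThan_Suc)
  also have "\<dots> = (\<Sum>i<d. (a i - a d / b d * b i) * u i)"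
    using assms(3) by simp
  finally show ?thesis
    unfolding span_over_def using assms by (auto intro!: Qp_diff Qp_mult Qp_divide)
qed

lemma dependence_lift:
  assumes "finite J" "j0 \<notin> J" "\<forall>j. l j \<in> Qp" "\<And>j. j \<in> J \<Longrightarrow> t j \<in> Qp"
    and "\<exists>j\<in>J. l j \<noteq> 0" "(\<Sum>j\<in>J. l j * (x j - t j * x j0)) = 0"
  shows "\<exists>l'. (\<forall>j. l' j \<in> Qp) \<and> (\<exists>j\<in>insert j0 J. l' j \<noteq> 0) \<and>
    (\<Sum>j\<in>insert j0 J. l' j * x j) = 0"
proof -
  define l' where "l' j = (if j = j0 then - (\<Sum>j\<in>J. l j * t j) else l j)" for j
  have "(\<Sum>j\<in>insert j0 J. l' j * x j) = l' j0 * x j0 + (\<Sum>j\<in>J. l j * x j)"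
    using assms(1,2) by (auto simp: l'_def intro!: sum.cong)
  also have "(\<Sum>j\<in>J. l j * x j) = (\<Sum>j\<in>J. l j * (x j - t j * x j0)) + (\<Sum>j\<in>J. l j * t j) * x j0"
    by (simp add: algebra_simps sum.distrib sum_distrib_left sum_distrib_right sum_subtractf)
  finally have "(\<Sum>j\<in>insert j0 J. l' j * x j) = 0"
    using assms(6) by (simp add: l'_def)
  moreover have "\<forall>j. l' j \<in> Qp"
    using assms(3,4) by (auto simp: l'_def intro!: Qp_uminus Qp_sum Qp_mult)
  moreover have "\<exists>j\<in>insert j0 J. l' j \<noteq> 0"
    using assms(2,5) by (auto simp: l'_def)
  ultimately show ?thesis
    by blast
qed

lemma span_over_dependent:
  assumes "finite J" "d < card J" "\<And>j. j \<in> J \<Longrightarrow> x j \<in> span_over Qp d u"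
  shows "\<exists>l. (\<forall>j. l j \<in> Qp) \<and> (\<exists>j\<in>J. l j \<noteq> 0) \<and> (\<Sum>j\<in>J. l j * x j) = 0"
  using assms
proof (induction d arbitrary: J x)
  case 0
  then have "J \<noteq> {}" "\<forall>j\<in>J. x j = 0"
    by (auto simp: span_over_def)
  then show ?case
    by (intro exI[of _ "\<lambda>_. 1"]) auto
next
  case (Suc d)
  have "\<forall>j\<in>J. \<exists>a. (\<forall>i. a i \<in> Qp) \<and> x j = (\<Sum>i<Suc d. a i * u i)"
    using Suc.prems(3) unfolding span_over_def by blast
  then obtain a where a_Qp: "\<And>j i. j \<in> J \<Longrightarrow> a j i \<in> Qp"
    and a_x: "\<And>j. j \<in> J \<Longrightarrow> x j = (\<Sum>i<Suc d. a j i * u i)"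
    by (metis bchoice)
  show ?case
  proof (cases "\<forall>j\<in>J. a j d = 0")
    case True
    then have "x j \<in> span_over Qp d u" if "j \<in> J" for j
      unfolding span_over_def using a_Qp[OF that] a_x[OF that] that
      by (auto intro!: exI[of _ "a j"])
    then show ?thesis
      using Suc.IH[OF Suc.prems(1) Suc_lessD[OF Suc.prems(2)]] by blast
  next
    case False
    then obtain j0 where j0: "j0 \<in> J" "a j0 d \<noteq> 0"
      by blast
    define J' where "J' = J - {j0}"
    define t where "t j = a j d / a j0 d" for j
    define x' where "x' j = x j - t j * x j0" for j
    have t: "t j \<in> Qp" if "j \<in> J" for j
      using a_Qp that j0 by (simp add: t_def Qp_divide)
    have "x' j \<in> span_over Qp d u" if "j \<in> J" for j
      using span_over_eliminate[of "a j" "a j0" d u] a_Qp that j0 a_x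
      by (simp add: x'_def t_def)
    moreover have "finite J'" "d < card J'"
      using Suc.prems j0 by (auto simp: J'_def)
    ultimately obtain l where l: "\<forall>j. l j \<in> Qp" "\<exists>j\<in>J'. l j \<noteq> 0" "(\<Sum>j\<in>J'. l j * x' j) = 0"
      using Suc.IH[of J' x'] by (auto simp: J'_def)
    have "(\<Sum>j\<in>J'. l j * (x j - t j * x j0)) = 0"
      using l(3) unfolding x'_def .
    moreover have "j0 \<notin> J'" "\<And>j. j \<in> J' \<Longrightarrow> t j \<in> Qp"
      using t by (auto simp: J'_def)
    ultimately have "\<exists>l'. (\<forall>j. l' j \<in> Qp) \<and> (\<exists>j\<in>insert j0 J'. l' j \<noteq> 0) \<and>
        (\<Sum>j\<in>insert j0 J'. l' j * x j) = 0"
      using dependence_lift[OF \<open>finite J'\<close> _ l(1) _ l(2)] by blast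
    moreover have "insert j0 J' = J"
      using j0 by (auto simp: J'_def)
    ultimately show ?thesis
      by simp
  qed
qed

lemma power_in_span_over:
  assumes "\<forall>i. c i \<in> Qp" "c d \<noteq> 0" "(\<Sum>i\<le>d. c i * \<alpha> ^ i) = 0"
  shows "\<alpha> ^ n \<in> span_over Qp d (\<lambda>i. \<alpha> ^ i)"
proof (induction n)
  case 0
  show ?case
  proof (cases "d = 0")
    case True
    with assms show ?thesis by simp
  qed (use span_over_generator[of 0 d "(^) \<alpha>"] in simp)
next
  case (Suc n)
  have top: "\<alpha> ^ d \<in> span_over Qp d (\<lambda>i. \<alpha> ^ i)"
  proof -
    have "(\<Sum>i<d. c i * \<alpha> ^ i) + c d * \<alpha> ^ d = 0"
      using assms(3) by (simp flip: lessThan_Suc_atMost)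
    then have "\<alpha> ^ d = (- 1 / c d) * (\<Sum>i<d. c i * \<alpha> ^ i)"
      using assms(2) by (simp add: field_simps eq_neg_iff_add_eq_0)
    also have "\<dots> = (\<Sum>i<d. (- c i / c d) * \<alpha> ^ i)"
      by (simp add: sum_distrib_left)
    finally show ?thesis
      using assms(1) unfolding span_over_def
      by (auto intro!: exI[of _ "\<lambda>i. - c i / c d"] Qp_divide Qp_uminus)
  qed
  obtain a where a: "\<forall>i. a i \<in> Qp" "\<alpha> ^ n = (\<Sum>i<d. a i * \<alpha> ^ i)"
    using Suc.IH unfolding span_over_def by blast
  have shifted: "\<alpha> ^ Suc i \<in> span_over Qp d (\<lambda>i. \<alpha> ^ i)" if "i < d" for i
    using top span_over_generator[of "Suc i" d "(^) \<alpha>"] that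
    by (cases "Suc i = d") auto
  have "\<alpha> ^ Suc n = (\<Sum>i<d. a i * \<alpha> ^ Suc i)"
    by (simp add: a(2) sum_distrib_left algebra_simps)
  also have "\<dots> \<in> span_over Qp d (\<lambda>i. \<alpha> ^ i)"
    using a(1) shifted by (intro span_over_sum span_over_scale) (auto simp del: power_Suc)
  finally show ?case .
qed

lemma algebraic_deg_le_qpoly:
  assumes "algebraic_deg_le Qp B \<alpha>"
  shows "algebraic_deg_le Qp B (qpoly f \<alpha>)"
proof -
  obtain c where c: "\<forall>i. c i \<in> Qp" "\<exists>i\<le>B. c i \<noteq> 0" "(\<Sum>i\<le>B. c i * \<alpha> ^ i) = 0"
    using assms unfolding algebraic_deg_le_def by blast
  define D where "D = {i. i \<le> B \<and> c i \<noteq> 0}"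
  define d where "d = Max D"
  have "finite D" "D \<noteq> {}"
    using c(2) by (auto simp: D_def)
  then have "d \<in> D" "\<And>i. i \<in> D \<Longrightarrow> i \<le> d"
    by (simp_all add: d_def)
  then have d: "d \<le> B" "c d \<noteq> 0" and above_d: "\<And>i. d < i \<Longrightarrow> i \<le> B \<Longrightarrow> c i = 0"
    by (auto simp: D_def not_le[symmetric])
  have "(\<Sum>i\<le>d. c i * \<alpha> ^ i) = (\<Sum>i\<le>B. c i * \<alpha> ^ i)"
    using d(1) above_d by (intro sum.mono_neutral_left) auto
  with c(3) have "(\<Sum>i\<le>d. c i * \<alpha> ^ i) = 0"
    by simp
  then have "qpoly g \<alpha> \<in> span_over Qp d (\<lambda>i. \<alpha> ^ i)" for g
    unfolding qpoly_altdef using c(1) d(2)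
    by (intro span_over_sum span_over_scale power_in_span_over) auto
  then have "qpoly f \<alpha> ^ j \<in> span_over Qp d (\<lambda>i. \<alpha> ^ i)" for j
    by (metis qpoly_power)
  then obtain l where l: "\<forall>j. l j \<in> Qp" "\<exists>j\<le>d. l j \<noteq> 0" "(\<Sum>j\<le>d. l j * qpoly f \<alpha> ^ j) = 0"
    using span_over_dependent[of "{..d}" d "\<lambda>j. qpoly f \<alpha> ^ j" "(^) \<alpha>"] by auto
  define l' where "l' j = (if j \<le> d then l j else 0)" for j
  have "(\<Sum>j\<le>B. l' j * qpoly f \<alpha> ^ j) = (\<Sum>j\<le>d. l' j * qpoly f \<alpha> ^ j)"
    using d(1) by (intro sum.mono_neutral_right) (auto simp: l'_def)
  also have "\<dots> = (\<Sum>j\<le>d. l j * qpoly f \<alpha> ^ j)"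
    by (simp add: l'_def)
  finally show ?thesis
    unfolding algebraic_deg_le_def using l d(1)
    by (intro exI[of _ l']) (auto simp: l'_def)
qed

end

section \<open>Residue fields\<close>

context valuation
begin

lemma near_pigeonhole:
  assumes "finite T" "card T \<le> n" "\<And>j. j \<le> n \<Longrightarrow> \<exists>t\<in>T. 0 < w (x j - t)"
  obtains i j where "i < j" "j \<le> n" "0 < w (x j - x i)"
proof -
  have "\<forall>j\<in>{..n}. \<exists>t. t \<in> T \<and> 0 < w (x j - t)"
    using assms(3) by blast
  then have "\<exists>g. \<forall>j\<in>{..n}. g j \<in> T \<and> 0 < w (x j - g j)"
    by (rule bchoice)
  then obtain g where "\<forall>j\<in>{..n}. g j \<in> T \<and> 0 < w (x j - g j)"
    by blast
  then have g: "g j \<in> T \<and> 0 < w (x j - g j)" if "j \<le> n" for j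
    using that by simp
  have "\<not> inj_on g {..n}"
  proof
    assume "inj_on g {..n}"
    then have "card {..n} \<le> card T"
      using g assms(1) by (intro card_inj_on_le) auto
    with assms(2) show False
      by simp
  qed
  then obtain i j where ij: "i \<le> n" "j \<le> n" "i \<noteq> j" "g i = g j"
    unfolding inj_on_def by auto
  have "0 < w ((x j - g j) - (x i - g i))" "0 < w ((x i - g i) - (x j - g j))"
    using g[OF ij(1)] g[OF ij(2)] by (auto intro: val_diff_gt)
  with ij show ?thesis
    using that[of i j] that[of j i] by (cases "i < j") auto
qed

lemma power_near_one_dvd:
  assumes "0 \<le> w y" "0 < w (y ^ D - 1)" "D dvd N"
  shows "0 < w (y ^ N - 1)"
proof -
  obtain m where "N = D * m"
    using assms(3) by blast
  then have "y ^ N - 1 = (y ^ D - 1) * (\<Sum>i<m. (y ^ D) ^ i)"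
    by (simp add: power_mult power_diff_1_eq)
  moreover have "0 \<le> w (\<Sum>i<m. (y ^ D) ^ i)"
    using assms(1) by (intro val_sum_ge val_power_nonneg)
  ultimately show ?thesis
    using assms(2) by (simp add: val_mult add_pos_nonneg)
qed

end

context padic
begin

lemma integer_relation:
  assumes "algebraic_deg_le Qp B y" "0 \<le> w y"
  obtains a :: "nat \<Rightarrow> int" and k where "k \<le> B" "a k = 1" "0 < w (\<Sum>i\<le>B. of_int (a i) * y ^ i)"
proof -
  obtain c k where c: "\<And>i. c i \<in> Qp" "\<And>i. 0 \<le> w (c i)" "k \<le> B" "c k = 1"
    "(\<Sum>i\<le>B. c i * y ^ i) = 0"
    using algebraic_deg_le_normalized[OF assms(1)] by metis
  have "\<forall>i. \<exists>m::int. 1 \<le> w (c i - of_int m)"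
  proof
    fix i
    show "\<exists>m::int. 1 \<le> w (c i - of_int m)"
      by (rule Qp_residue[where x="c i" and k=1, OF c(1) c(2)]) (auto simp: one_ereal_def)
  qed
  then obtain a0 :: "nat \<Rightarrow> int" where a0: "\<And>i. 1 \<le> w (c i - of_int (a0 i))"
    by metis
  define a where "a i = (if i = k then 1 else a0 i)" for i
  have near_a: "0 < w ((of_int (a i) - c i) * y ^ i)" for i
    using a0[of i] c(4) assms(2) val_diff_commute[of "c i"]
    by (cases "w (c i - of_int (a0 i))") (auto simp: a_def val_mult val_power_nonneg add_pos_nonneg)
  have "(\<Sum>i\<le>B. of_int (a i) * y ^ i) = (\<Sum>i\<le>B. (of_int (a i) - c i) * y ^ i)"
    using c(5) by (simp add: algebra_simps sum_subtractf)
  then have "0 < w (\<Sum>i\<le>B. of_int (a i) * y ^ i)"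
    using near_a by (simp add: val_sum_gt)
  then show ?thesis
    using that[of k a] c(3) by (simp add: a_def)
qed

lemma integer_relation_truncate:
  assumes "0 \<le> w y" "k \<le> B" "\<not> int p dvd a k" "0 < w (\<Sum>i\<le>B. of_int (a i) * y ^ i)"
  obtains e where "e \<le> B" "\<not> int p dvd a e" "0 < w (\<Sum>i\<le>e. of_int (a i) * y ^ i)"
proof -
  define D where "D = {i. i \<le> B \<and> \<not> int p dvd a i}"
  define e where "e = Max D"
  have "k \<in> D" "finite D"
    using assms(2,3) by (auto simp: D_def intro: finite_subset[of _ "{..B}"])
  then have "e \<in> D" and e_max: "\<And>i. i \<in> D \<Longrightarrow> i \<le> e"
    unfolding e_def by (auto intro: Max_in Max_ge)
  then have e: "e \<le> B" "\<not> int p dvd a e"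
    by (simp_all add: D_def)
  have "0 < w (of_int (a i) * y ^ i)" if "i \<in> {e<..B}" for i
  proof -
    have "int p dvd a i"
      using e_max[of i] that by (auto simp: D_def)
    then show ?thesis
      using val_power_nonneg[OF assms(1), of i] by (simp add: val_mult add_pos_nonneg val_of_int_pos)
  qed
  then have "0 < w (\<Sum>i\<in>{e<..B}. of_int (a i) * y ^ i)"
    by (intro val_sum_gt) auto
  moreover have "{..B} = {..e} \<union> {e<..B}"
    using e(1) by auto
  then have "(\<Sum>i\<le>B. of_int (a i) * y ^ i)
      = (\<Sum>i\<le>e. of_int (a i) * y ^ i) + (\<Sum>i\<in>{e<..B}. of_int (a i) * y ^ i)"
    by (simp only:) (rule sum.union_disjoint, auto)
  ultimately have "0 < w (\<Sum>i\<le>e. of_int (a i) * y ^ i)"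
    using assms(4) val_diff_gt[of 0 "\<Sum>i\<le>B. of_int (a i) * y ^ i" "\<Sum>i\<in>{e<..B}. of_int (a i) * y ^ i"]
    by simp
  with e show ?thesis
    by (rule that)
qed

text \<open>Multiplying by an inverse of the leading coefficient modulo \<open>p\<close> makes the relation monic
  modulo the maximal ideal.\<close>

lemma near_integer_relation:
  assumes "algebraic_deg_le Qp B y" "0 \<le> w y"
  obtains e and b :: "nat \<Rightarrow> int" where "e \<le> B" "0 < w (y ^ e - (\<Sum>i<e. of_int (b i) * y ^ i))"
proof -
  obtain a :: "nat \<Rightarrow> int" and k where "k \<le> B" "a k = 1" "0 < w (\<Sum>i\<le>B. of_int (a i) * y ^ i)"
    using integer_relation[OF assms] by blast
  moreover have "\<not> int p dvd 1"
    using prime_int_p by (simp add: prime_int_iff)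
  ultimately obtain e where e: "e \<le> B" "\<not> int p dvd a e"
    and relation: "0 < w (\<Sum>i\<le>e. of_int (a i) * y ^ i)"
    using integer_relation_truncate[OF assms(2)] by metis
  have "coprime (a e) (int p)"
    using e(2) prime_int_p by (simp add: prime_imp_coprime coprime_commute)
  then obtain u where "[a e * u = 1] (mod int p)"
    using cong_solve_coprime_int by blast
  then have "int p dvd (1 - a e * u)"
    by (metis cong_iff_dvd_diff cong_sym)
  have "y ^ e - (\<Sum>i<e. of_int (- u * a i) * y ^ i)
      = of_int u * (\<Sum>i\<le>e. of_int (a i) * y ^ i) + of_int (1 - a e * u) * y ^ e"
    by (simp add: sum_distrib_left algebra_simps sum_negf flip: lessThan_Suc_atMost)
  also have "0 < w \<dots>"
  proof (rule val_add_gt)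
    show "0 < w (of_int u * (\<Sum>i\<le>e. of_int (a i) * y ^ i))"
      using relation by (simp add: val_mult add_nonneg_pos val_of_int_nonneg)
    have "0 < w (of_int (1 - a e * u))"
      using \<open>int p dvd (1 - a e * u)\<close> by (rule val_of_int_pos)
    then show "0 < w (of_int (1 - a e * u) * y ^ e)"
      using val_power_nonneg[OF assms(2)]
      by (simp add: val_mult add_pos_nonneg del: of_int_diff of_int_mult)
  qed
  finally show ?thesis
    by (rule that[OF e(1)])
qed

lemma power_near_integer_combination:
  assumes "0 \<le> w y" and relation: "0 < w (y ^ e - (\<Sum>i<e. of_int (b i) * y ^ i))"
  shows "\<exists>c :: nat \<Rightarrow> int. 0 < w (y ^ j - (\<Sum>i<e. of_int (c i) * y ^ i))"
proof -
  obtain e' where e: "e = Suc e'"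
    using relation by (cases e) auto
  show ?thesis
  proof (induction j)
    case 0
    have "(\<Sum>i<e. of_int (if i = 0 then 1 else 0) * y ^ i) = 1"
      by (simp add: e sum.lessThan_Suc_shift del: sum.lessThan_Suc)
    then show ?case
      by (intro exI[of _ "\<lambda>i. if i = 0 then 1 else 0"]) simp
  next
    case (Suc j)
    then obtain c where c: "0 < w (y ^ j - (\<Sum>i<e. of_int (c i) * y ^ i))"
      by blast
    define c' where "c' i = (if i = 0 then 0 else c (i - 1)) + c e' * b i" for i
    have "(\<Sum>i<e. of_int (c' i) * y ^ i)
        = (\<Sum>i<e'. of_int (c i) * y ^ Suc i) + of_int (c e') * (\<Sum>i<e. of_int (b i) * y ^ i)"
      by (simp add: c'_def e sum.distrib sum_distrib_left algebra_simps sum.lessThan_Suc_shift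
          del: sum.lessThan_Suc)
    moreover have "y * (\<Sum>i<e. of_int (c i) * y ^ i)
        = (\<Sum>i<e'. of_int (c i) * y ^ Suc i) + of_int (c e') * y ^ e"
      by (simp add: e sum_distrib_left algebra_simps)
    ultimately have "y ^ Suc j - (\<Sum>i<e. of_int (c' i) * y ^ i)
        = y * (y ^ j - (\<Sum>i<e. of_int (c i) * y ^ i))
          + of_int (c e') * (y ^ e - (\<Sum>i<e. of_int (b i) * y ^ i))"
      by (simp add: algebra_simps)
    also have "0 < w \<dots>"
      using c relation assms(1)
      by (intro val_add_gt) (simp_all add: val_mult add_nonneg_pos val_of_int_nonneg)
    finally show ?case
      by blast
  qed
qed

lemma power_near_residue_set:
  assumes "0 \<le> w y" and relation: "0 < w (y ^ e - (\<Sum>i<e. of_int (b i) * y ^ i))"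
  shows "\<exists>t\<in>(\<lambda>c. \<Sum>i<e. of_int (c i) * y ^ i) ` (\<Pi>\<^sub>E i\<in>{..<e}. {0..<int p}).
    0 < w (y ^ j - t)"
proof -
  obtain c :: "nat \<Rightarrow> int" where c: "0 < w (y ^ j - (\<Sum>i<e. of_int (c i) * y ^ i))"
    using power_near_integer_combination[OF assms] by blast
  define r where "r = restrict (\<lambda>i. c i mod int p) {..<e}"
  have r: "r \<in> (\<Pi>\<^sub>E i\<in>{..<e}. {0..<int p})"
    using prime_gt_0_nat[OF prime_p] by (simp add: r_def)
  have "y ^ j - (\<Sum>i<e. of_int (r i) * y ^ i)
      = (y ^ j - (\<Sum>i<e. of_int (c i) * y ^ i)) + (\<Sum>i<e. of_int (c i - r i) * y ^ i)"
    by (simp add: algebra_simps sum_subtractf)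
  also have "0 < w \<dots>"
  proof (intro val_add_gt val_sum_gt)
    fix i assume "i \<in> {..<e}"
    then have "0 < w (of_int (c i - r i))"
      by (simp add: r_def val_of_int_pos del: of_int_diff)
    then show "0 < w (of_int (c i - r i) * y ^ i)"
      using val_power_nonneg[OF assms(1), of i] by (simp add: val_mult add_pos_nonneg del: of_int_diff)
  qed (use c in auto)
  finally show ?thesis
    using r by blast
qed

lemma power_fact_near_one:
  assumes "algebraic_deg_le Qp B y" "w y = 0"
  shows "0 < w (y ^ fact (p ^ B) - 1)"
proof -
  have "0 \<le> w y"
    using assms(2) by simp
  then obtain e and b :: "nat \<Rightarrow> int" where e: "e \<le> B"
    and relation: "0 < w (y ^ e - (\<Sum>i<e. of_int (b i) * y ^ i))"
    by (rule near_integer_relation[OF assms(1)])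
  define T where "T = (\<lambda>c. \<Sum>i<e. of_int (c i) * y ^ i) ` (\<Pi>\<^sub>E i\<in>{..<e}. {0..<int p})"
  have "card T \<le> card (\<Pi>\<^sub>E i\<in>{..<e}. {0..<int p})"
    unfolding T_def by (intro card_image_le) (simp add: finite_PiE)
  also have "\<dots> = p ^ e"
    by (simp add: card_PiE)
  also have "\<dots> \<le> p ^ B"
    using e prime_gt_0_nat[OF prime_p] by (simp add: power_increasing)
  finally have card_T: "card T \<le> p ^ B" .
  have finite_T: "finite T"
    unfolding T_def by (simp add: finite_PiE)
  have near_T: "\<exists>t\<in>T. 0 < w (y ^ j - t)" if "j \<le> p ^ B" for j
    unfolding T_def using power_near_residue_set[OF \<open>0 \<le> w y\<close> relation] .
  obtain i j where ij: "i < j" "j \<le> p ^ B" "0 < w (y ^ j - y ^ i)"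
    by (rule near_pigeonhole[OF finite_T card_T near_T])
  have "y ^ j = y ^ i * y ^ (j - i)"
    using ij(1) by (metis le_add_diff_inverse less_imp_le power_add)
  then have "w (y ^ j - y ^ i) = w (y ^ i) + w (y ^ (j - i) - 1)"
    by (simp add: right_diff_distrib flip: val_mult)
  then have "0 < w (y ^ (j - i) - 1)"
    using ij(3) assms(2) by (simp add: val_power)
  moreover have "(j - i) dvd fact (p ^ B)"
    using ij by (intro dvd_fact) auto
  ultimately show ?thesis
    by (rule power_near_one_dvd[OF \<open>0 \<le> w y\<close>])
qed

end

section \<open>Sequential compactness\<close>

lemma constant_subseq:
  assumes "finite (range f)"
  shows "\<exists>r :: nat \<Rightarrow> nat. \<exists>c. strict_mono r \<and> (\<forall>n. f (r n) = c)"
proof -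
  obtain c where "infinite (f -` {c})"
    using inf_img_fin_dom[OF assms] by auto
  then obtain r :: "nat \<Rightarrow> nat" where "strict_mono r" "\<forall>n. r n \<in> f -` {c}"
    using infinite_enumerate by blast
  then show ?thesis
    by auto
qed

lemma frequently_close_imp_v_converges:
  assumes "\<And>N::real. \<exists>\<^sub>F n in sequentially. ereal N < w (x n - r)"
  obtains s where "v_converges w (x \<circ> s) r"
proof -
  have "\<forall>m::nat. \<exists>n. ereal (real m) < w (x n - r)"
    using assms frequently_ex by blast
  then obtain s where s: "\<And>m. ereal (real m) < w (x (s m) - r)"
    by metis
  have "\<forall>m\<ge>nat \<lceil>N\<rceil>. ereal N < w (x (s m) - r)" for N
  proof (intro allI impI)
    fix m assume "nat \<lceil>N\<rceil> \<le> m"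
    then have "ereal N \<le> ereal (real m)"
      by (simp add: nat_ceiling_le_eq)
    then show "ereal N < w (x (s m) - r)"
      using s[of m] by (rule le_less_trans)
  qed
  then show ?thesis
    using that unfolding v_converges_def comp_def by blast
qed

context valuation
begin

lemma v_converges_unique:
  assumes "v_converges w x l" "v_converges w x m"
  shows "l = m"
proof -
  have "ereal N < w (l - m)" for N
  proof -
    have "eventually (\<lambda>n. ereal N < w (x n - m) \<and> ereal N < w (x n - l)) sequentially"
      using assms by (simp add: v_converges_eventually eventually_conj)
    then obtain n where "ereal N < w (x n - m)" "ereal N < w (x n - l)"
      using eventually_happens'[OF sequentially_bot] by blast
    then have "ereal N < w ((x n - m) - (x n - l))"
      by (rule val_diff_gt)
    then show ?thesis
      by simp
  qed
  then have "w (l - m) = \<infinity>"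
    by (cases "w (l - m)") (metis less_irrefl, auto)
  then show ?thesis
    by simp
qed

lemma val_poly_roots:
  obtains root where "\<And>z. w (poly H z) = w (lead_coeff H) + (\<Sum>i<degree H. w (z - root i))"
proof -
  obtain root where H: "smult (lead_coeff H) (\<Prod>i<degree H. [:- root i, 1:]) = H"
    using complex_poly_decompose' by blast
  have "w (poly H z) = w (lead_coeff H) + (\<Sum>i<degree H. w (z - root i))" for z
  proof -
    have "poly H z = poly (smult (lead_coeff H) (\<Prod>i<degree H. [:- root i, 1:])) z"
      using H by simp
    also have "\<dots> = lead_coeff H * (\<Prod>i<degree H. z - root i)"
      by (simp add: poly_prod)
    finally show ?thesis
      by (simp add: val_mult val_prod)
  qed
  then show ?thesis
    by (rule that)
qed

lemma root_cluster_point: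
  assumes "H \<noteq> 0" "v_converges w (\<lambda>n. poly H (y n)) 0"
  obtains r where "\<And>N::real. \<exists>\<^sub>F n in sequentially. ereal N < w (y n - r)"
proof -
  note cluster_point = that
  obtain root where val_H: "\<And>z. w (poly H z) = w (lead_coeff H) + (\<Sum>i<degree H. w (z - root i))"
    using val_poly_roots[where H = H] by blast
  obtain a where a: "w (lead_coeff H) = ereal a"
    using val_real[of "lead_coeff H"] assms(1) by auto
  show ?thesis
  proof (rule ccontr)
    assume no_cluster: "\<not> thesis"
    have "\<exists>N::real. eventually (\<lambda>n. w (y n - root i) \<le> ereal N) sequentially" for i
    proof -
      obtain N where "\<not> (\<exists>\<^sub>F n in sequentially. ereal N < w (y n - root i))"
        using no_cluster cluster_point[of "root i"] by blast
      then show ?thesis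
        by (auto simp: not_frequently not_less)
    qed
    then obtain N where "\<And>i. eventually (\<lambda>n. w (y n - root i) \<le> ereal (N i)) sequentially"
      by metis
    then have "eventually (\<lambda>n. \<forall>i\<in>{..<degree H}. w (y n - root i) \<le> ereal (N i)) sequentially"
      by (simp add: eventually_ball_finite)
    moreover have "eventually (\<lambda>n. ereal (a + (\<Sum>i<degree H. N i)) < w (poly H (y n))) sequentially"
      using assms(2) by (simp add: v_converges_eventually)
    ultimately have "eventually (\<lambda>_. False) sequentially"
    proof eventually_elim
      case (elim n)
      have "w (poly H (y n)) \<le> ereal a + (\<Sum>i<degree H. ereal (N i))"
        unfolding val_H a using elim(1) by (intro add_left_mono sum_mono) auto
      with elim(2) show False
        by (simp add: sum_ereal)
    qed
    then show False
      by simp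
  qed
qed

end

context padic
begin

lemma residue_class_subseq:
  fixes x :: "nat \<Rightarrow> complex"
  assumes "\<And>n. x n \<in> Qp" "\<And>n. 0 \<le> w (x n)"
  obtains r :: "nat \<Rightarrow> nat" where "strict_mono r" "\<And>m n. ereal (real k) \<le> w (x (r m) - x (r n))"
proof -
  have "\<forall>n. \<exists>m. m \<in> {0..<int p ^ k} \<and> ereal (real k) \<le> w (x n - of_int m)"
    using Qp_residue[OF assms] by metis
  then obtain \<rho> where \<rho>: "\<And>n. \<rho> n \<in> {0..<int p ^ k}" "\<And>n. ereal (real k) \<le> w (x n - of_int (\<rho> n))"
    by metis
  have "finite (range \<rho>)"
    using \<rho>(1) by (auto intro: finite_subset[of _ "{0..<int p ^ k}"])
  then obtain r :: "nat \<Rightarrow> nat" and c where r: "strict_mono r" "\<And>n. \<rho> (r n) = c"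
    by (blast dest: constant_subseq)
  have near_c: "ereal (real k) \<le> w (x (r n) - of_int c)" for n
    using \<rho>(2)[of "r n"] by (simp only: r(2))
  have "ereal (real k) \<le> w ((x (r m) - of_int c) - (x (r n) - of_int c))" for m n
    by (rule val_diff_ge[OF near_c near_c])
  with r(1) show ?thesis
    using that by simp
qed

lemma valuation_ring_subseq_converges:
  fixes x :: "nat \<Rightarrow> complex"
  assumes "\<And>n. x n \<in> Qp" "\<And>n. 0 \<le> w (x n)"
  obtains r l where "strict_mono r" "l \<in> Qp" "0 \<le> w l" "v_converges w (x \<circ> r) l"
proof -
  define P where "P k s \<longleftrightarrow> (\<forall>m n. ereal (real k) \<le> w (x (s m) - x (s n)))"
    for k and s :: "nat \<Rightarrow> nat"
  interpret subseqs P
  proof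
    fix k and s :: "nat \<Rightarrow> nat"
    obtain r :: "nat \<Rightarrow> nat" where "strict_mono r" "\<And>m n. ereal (real k) \<le> w (x (s (r m)) - x (s (r n)))"
      using residue_class_subseq[of "x \<circ> s" k] assms by auto
    then show "\<exists>r'. strict_mono r' \<and> P k (s \<circ> r')"
      by (auto simp: P_def)
  qed
  have tail: "P k (diagseq \<circ> (+) (Suc k))" for k
    by (rule diagseq_holds) (auto simp: P_def)
  have "v_cauchy w (x \<circ> diagseq)"
    unfolding v_cauchy_def
  proof
    fix N :: real
    define k where "k = Suc (nat \<lceil>N\<rceil>)"
    have "ereal N < w (x (diagseq m) - x (diagseq n))" if "Suc k \<le> m" "Suc k \<le> n" for m n
    proof -
      have "ereal (real k) \<le> w (x (diagseq (Suc k + (m - Suc k))) - x (diagseq (Suc k + (n - Suc k))))"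
        using tail[of k] unfolding P_def by simp
      moreover have "N < real k"
        unfolding k_def by linarith
      ultimately show ?thesis
        using that by (cases "w (x (diagseq m) - x (diagseq n))") auto
    qed
    then show "\<exists>n0. \<forall>m\<ge>n0. \<forall>n\<ge>n0. ereal N < w ((x \<circ> diagseq) m - (x \<circ> diagseq) n)"
      by auto
  qed
  then obtain l where "l \<in> Qp" "v_converges w (x \<circ> diagseq) l"
    using Qp_complete assms(1) by (metis comp_apply)
  moreover have "0 \<le> w l"
    using calculation(2) by (rule v_converges_nonneg) (simp add: assms(2))
  ultimately show ?thesis
    using that subseq_diagseq by blast
qed

lemma valuation_ring_subseq_converges_vec:
  fixes c :: "nat \<Rightarrow> nat \<Rightarrow> complex" and m :: nat
  assumes "\<And>n i. c n i \<in> Qp" "\<And>n i. 0 \<le> w (c n i)"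
  shows "\<exists>r L. strict_mono r \<and>
    (\<forall>i<m. L i \<in> Qp \<and> 0 \<le> w (L i) \<and> v_converges w (\<lambda>n. c (r n) i) (L i))"
proof (induction m)
  case 0
  show ?case
    using strict_mono_id by blast
next
  case (Suc m)
  then obtain r L where r: "strict_mono r"
    and L: "\<And>i. i < m \<Longrightarrow> L i \<in> Qp \<and> 0 \<le> w (L i) \<and> v_converges w (\<lambda>n. c (r n) i) (L i)"
    by blast
  obtain r' l where r': "strict_mono r'" "l \<in> Qp" "0 \<le> w l" "v_converges w ((\<lambda>n. c (r n) m) \<circ> r') l"
    using valuation_ring_subseq_converges[of "\<lambda>n. c (r n) m"] assms by blast
  have "v_converges w (\<lambda>n. c ((r \<circ> r') n) i) ((L(m := l)) i)" if "i < Suc m" for i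
    using that L v_converges_subseq[where x="\<lambda>n. c (r n) i", OF _ r'(1)] r'(4)
    by (cases "i = m") (auto simp: comp_def less_Suc_eq)
  with r r' L show ?case
    by (intro exI[of _ "r \<circ> r'"] exI[of _ "L(m := l)"])
      (auto simp: less_Suc_eq strict_mono_def)
qed

end

context valuation
begin

lemma v_converges_limit_relation:
  assumes L: "\<And>i. i \<le> B \<Longrightarrow> v_converges w (\<lambda>n. c n i) (L i)"
    and relation: "\<And>n. (\<Sum>i\<le>B. c n i * y n ^ i) = 0" and y: "\<And>n. 0 \<le> w (y n)"
  shows "v_converges w (\<lambda>n. poly (\<Sum>i\<le>B. monom (L i) i) (y n)) 0"
  unfolding v_converges_eventually
proof
  fix N
  have "eventually (\<lambda>n. \<forall>i\<in>{..B}. ereal N < w (c n i - L i)) sequentially"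
    using L by (auto simp: eventually_ball_finite v_converges_eventually)
  then show "eventually (\<lambda>n. ereal N < w (poly (\<Sum>i\<le>B. monom (L i) i) (y n) - 0)) sequentially"
  proof eventually_elim
    case (elim n)
    have "poly (\<Sum>i\<le>B. monom (L i) i) (y n) = (\<Sum>i\<le>B. (L i - c n i) * y n ^ i)"
      using relation[of n] by (simp add: poly_sum poly_monom algebra_simps sum_subtractf)
    also have "ereal N < w \<dots>"
    proof (rule val_sum_gt)
      fix i assume "i \<in> {..B}"
      then have "ereal (0 + N) < w (y n ^ i) + w (L i - c n i)"
        using elim y val_diff_commute[of "L i" "c n i"]
        by (intro ereal_add_less) (auto simp: val_power_nonneg zero_ereal_def[symmetric])
      then show "ereal N < w ((L i - c n i) * y n ^ i)"
        by (simp add: val_mult add.commute)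
    qed auto
    finally show ?case
      by simp
  qed
qed

end

context padic
begin

text \<open>The relations of degree at most \<open>B\<close> satisfied by the \<open>\<beta>\<^sub>n\<close>, normalised to integral
  coefficients one of which is \<open>1\<close>, converge along a subsequence to a nonzero polynomial.\<close>

lemma algebraic_deg_le_limit_relation:
  fixes \<beta> :: "nat \<Rightarrow> complex"
  assumes "\<And>n. algebraic_deg_le Qp B (\<beta> n)" "\<And>n. 0 \<le> w (\<beta> n)"
  obtains s H where "strict_mono s" "H \<noteq> 0" "v_converges w (\<lambda>n. poly H (\<beta> (s n))) 0"
proof -
  have "\<forall>n. \<exists>c k. (\<forall>i. c i \<in> Qp \<and> 0 \<le> w (c i)) \<and> k \<le> B \<and> c k = 1 \<and> (\<Sum>i\<le>B. c i * \<beta> n ^ i) = 0"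
    using algebraic_deg_le_normalized[OF assms(1)] by metis
  then obtain c k where c: "\<And>n i. c n i \<in> Qp" "\<And>n i. 0 \<le> w (c n i)" "\<And>n. k n \<le> B"
    "\<And>n. c n (k n) = 1" "\<And>n. (\<Sum>i\<le>B. c n i * \<beta> n ^ i) = 0"
    by metis
  have "finite (range k)"
    using c(3) by (auto intro: finite_subset[of _ "{..B}"])
  then obtain r1 :: "nat \<Rightarrow> nat" and k0 where r1: "strict_mono r1" "\<And>n. k (r1 n) = k0"
    by (blast dest: constant_subseq)
  obtain r2 L where r2: "strict_mono r2"
    and L: "\<And>i. i < Suc B \<Longrightarrow> L i \<in> Qp \<and> v_converges w (\<lambda>n. c (r1 (r2 n)) i) (L i)"
    using valuation_ring_subseq_converges_vec[of "\<lambda>n. c (r1 n)" "Suc B"] c(1,2) by blast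
  have "k0 \<le> B"
    using c(3) r1(2) by metis
  have "c (r1 (r2 n)) k0 = 1" for n
    using c(4)[of "r1 (r2 n)"] r1(2)[of "r2 n"] by simp
  then have "v_converges w (\<lambda>n. 1) (L k0)"
    using L[of k0] \<open>k0 \<le> B\<close> by simp
  then have "L k0 = 1"
    using v_converges_const v_converges_unique by blast
  define H where "H = (\<Sum>i\<le>B. monom (L i) i)"
  have "coeff H k0 = 1"
    using \<open>k0 \<le> B\<close> \<open>L k0 = 1\<close> by (simp add: H_def coeff_sum coeff_monom)
  then have "H \<noteq> 0"
    by auto
  have "v_converges w (\<lambda>n. c (r1 (r2 n)) i) (L i)" if "i \<le> B" for i
    using L[of i] that by simp
  then have "v_converges w (\<lambda>n. poly H (\<beta> ((r1 \<circ> r2) n))) 0"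
    unfolding H_def comp_def
    by (rule v_converges_limit_relation[where y = "\<lambda>n. \<beta> (r1 (r2 n))"]) (use c(5) assms(2) in auto)
  moreover have "strict_mono (r1 \<circ> r2)"
    using r1(1) r2 by (rule strict_mono_o)
  ultimately show ?thesis
    using \<open>H \<noteq> 0\<close> that by blast
qed

lemma algebraic_deg_le_cluster_point:
  fixes \<beta> :: "nat \<Rightarrow> complex"
  assumes "\<And>n. algebraic_deg_le Qp B (\<beta> n)" "\<And>n. 0 \<le> w (\<beta> n)"
  obtains r where "0 \<le> w r" "\<And>N::real. \<exists>\<^sub>F n in sequentially. ereal N < w (\<beta> n - r)"
proof -
  obtain s H where s: "strict_mono s" and H: "H \<noteq> 0" "v_converges w (\<lambda>n. poly H (\<beta> (s n))) 0"
    by (rule algebraic_deg_le_limit_relation[OF assms])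
  obtain r where r: "\<And>N::real. \<exists>\<^sub>F n in sequentially. ereal N < w (\<beta> (s n) - r)"
    using root_cluster_point[where y = "\<lambda>n. \<beta> (s n)", OF H] by blast
  have frequently: "\<exists>\<^sub>F n in sequentially. ereal N < w (\<beta> n - r)" for N
    using r[of N] s unfolding frequently_sequentially
    by (meson le_trans seq_suble)
  obtain n where "0 < w (\<beta> n - r)"
    using frequently_ex[OF frequently[of 0]] by (metis zero_ereal_def)
  then have "0 \<le> w r"
    using val_diff_ge[of 0 "\<beta> n" "\<beta> n - r"] assms(2)[of n] by simp
  then show ?thesis
    using that frequently by blast
qed

lemma qpoly_val_diff_ge:
  obtains C :: real where
    "\<And>x z. 0 \<le> w x \<Longrightarrow> 0 \<le> w z \<Longrightarrow> ereal C + w (x - z) \<le> w (qpoly f x - qpoly f z)"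
proof -
  define C where "C = - (\<Sum>i\<le>degree f. \<bar>real_of_int (padic_val_rat p (coeff f i))\<bar>)"
  have C: "ereal C \<le> w (of_rat (coeff f i))" if "i \<le> degree f" for i
  proof (cases "coeff f i = 0")
    case False
    have "\<bar>real_of_int (padic_val_rat p (coeff f i))\<bar>
        \<le> (\<Sum>i\<le>degree f. \<bar>real_of_int (padic_val_rat p (coeff f i))\<bar>)"
      using that by (intro member_le_sum) auto
    then show ?thesis
      using val_of_rat[OF False] by (simp add: C_def)
  qed simp
  have "ereal C + w (x - z) \<le> w (qpoly f x - qpoly f z)" if "0 \<le> w x" "0 \<le> w z" for x z
  proof -
    have "qpoly f x - qpoly f z
        = (\<Sum>i\<le>degree f. of_rat (coeff f i) * ((x - z) * (\<Sum>j<i. z ^ (i - Suc j) * x ^ j)))"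
      by (simp add: qpoly_altdef sum_subtractf power_diff_sumr2[symmetric] right_diff_distrib)
    also have "ereal C + w (x - z) \<le> w \<dots>"
    proof (rule val_sum_ge)
      fix i assume "i \<in> {..degree f}"
      moreover have "0 \<le> w (\<Sum>j<i. z ^ (i - Suc j) * x ^ j)"
        using that by (intro val_sum_ge) (simp add: val_mult val_power_nonneg)
      ultimately show "ereal C + w (x - z)
          \<le> w (of_rat (coeff f i) * ((x - z) * (\<Sum>j<i. z ^ (i - Suc j) * x ^ j)))"
        using C by (auto simp: val_mult add_mono add_increasing2)
    qed
    finally show ?thesis .
  qed
  then show ?thesis
    using that by blast
qed

end

section \<open>Integer-valued polynomials\<close>

lemma countable_rat_poly: "countable (UNIV :: rat poly set)"
proof (rule countable_image_inj_on[of coeffs])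
  show "countable (range (coeffs :: rat poly \<Rightarrow> rat list))"
    by (rule countable_subset[OF subset_UNIV countableI_type])
  show "inj (coeffs :: rat poly \<Rightarrow> rat list)"
    by (simp add: inj_on_def coeffs_eq_iff)
qed

locale int_valued_polys =
  fixes v :: "nat \<Rightarrow> complex \<Rightarrow> ereal" and E :: "nat \<Rightarrow> complex set"
  assumes models: "\<And>q. prime q \<Longrightarrow> padic_closure_model q (v q)"
begin

lemma padic_at: "prime q \<Longrightarrow> padic (v q) q"
  using models unfolding padic_def valuation_def padic_axioms_def padic_closure_model_def by auto

lemma IntR_iff: "f \<in> IntR v E \<longleftrightarrow> (\<forall>q. prime q \<longrightarrow> (\<forall>a\<in>E q. 0 \<le> v q (qpoly f a)))"
  by (simp add: IntR_def qpoly_def)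

lemma IntRing_simps [simp]:
  "carrier (IntRing v E) = IntR v E" "x \<otimes>\<^bsub>IntRing v E\<^esub> y = x * y"
  "x \<oplus>\<^bsub>IntRing v E\<^esub> y = x + y" "\<one>\<^bsub>IntRing v E\<^esub> = 1" "\<zero>\<^bsub>IntRing v E\<^esub> = 0"
  by (simp_all add: IntRing_def)

lemma IntR_mult: "f \<in> IntR v E \<Longrightarrow> g \<in> IntR v E \<Longrightarrow> f * g \<in> IntR v E"
  unfolding IntR_iff
proof (intro allI impI ballI)
  fix q :: nat and a
  assume f: "\<forall>q. prime q \<longrightarrow> (\<forall>a\<in>E q. 0 \<le> v q (qpoly f a))"
    and g: "\<forall>q. prime q \<longrightarrow> (\<forall>a\<in>E q. 0 \<le> v q (qpoly g a))"
    and q: "prime q" and a: "a \<in> E q"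
  interpret padic "v q" q
    using padic_at[OF q] .
  show "0 \<le> v q (qpoly (f * g) a)"
    using f g q a by (simp add: val_mult)
qed

lemma IntR_add: "f \<in> IntR v E \<Longrightarrow> g \<in> IntR v E \<Longrightarrow> f + g \<in> IntR v E"
  unfolding IntR_iff
proof (intro allI impI ballI)
  fix q :: nat and a
  assume f: "\<forall>q. prime q \<longrightarrow> (\<forall>a\<in>E q. 0 \<le> v q (qpoly f a))"
    and g: "\<forall>q. prime q \<longrightarrow> (\<forall>a\<in>E q. 0 \<le> v q (qpoly g a))"
    and q: "prime q" and a: "a \<in> E q"
  interpret padic "v q" q
    using padic_at[OF q] .
  show "0 \<le> v q (qpoly (f + g) a)"
    using f g q a by (simp add: val_add_ge)
qed

lemma IntR_const_int: "[:of_int c:] \<in> IntR v E"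
  unfolding IntR_iff
proof (intro allI impI ballI)
  fix q :: nat and a
  assume "prime q"
  interpret padic "v q" q
    using padic_at[OF \<open>prime q\<close>] .
  show "0 \<le> v q (qpoly [:of_int c:] a)"
    using val_of_int_nonneg by simp
qed

lemma IntR_1: "1 \<in> IntR v E"
  using IntR_const_int[of 1] by (simp add: one_pCons)

lemma IntR_diff: "f \<in> IntR v E \<Longrightarrow> g \<in> IntR v E \<Longrightarrow> f - g \<in> IntR v E"
  using IntR_add[OF _ IntR_mult[OF IntR_const_int[of "-1"]], of f g] by simp

lemma IntR_power: "f \<in> IntR v E \<Longrightarrow> f ^ n \<in> IntR v E"
  by (induction n) (auto simp: IntR_1 IntR_mult)

lemma ideal_power_mem:
  assumes "ideal J (IntRing v E)" "f \<in> J" "0 < n"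
  shows "f ^ n \<in> J"
proof -
  obtain m where "n = Suc m"
    using assms(3) not0_implies_Suc by blast
  moreover have "f \<in> IntR v E"
    using additive_subgroup.a_subset[OF ideal.axioms(1)[OF assms(1)]] assms(2) by auto
  ultimately show ?thesis
    using ideal.I_l_closed[OF assms(1,2), of "f ^ m"] IntR_power by (metis IntRing_simps(1,2) power_Suc2)
qed

lemma IntR_prod: "(\<And>i. i \<in> A \<Longrightarrow> f i \<in> IntR v E) \<Longrightarrow> (\<Prod>i\<in>A. f i) \<in> IntR v E"
  by (induction A rule: infinite_finite_induct) (auto simp: IntR_1 IntR_mult)

end

locale prime_ideal_above_p = int_valued_polys v E + primeideal M "IntRing v E"
  for v E M +
  fixes p B :: nat
  assumes prime_p: "prime p"
    and p_in_M: "[:of_nat p:] \<in> M"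
    and E_p_integral: "E p \<subseteq> Zbar (v p)"
    and E_p_closed: "closed_in_Zbar (v p) (E p)"
    and B_pos: "0 < B"
    and E_p_algebraic: "\<And>a. a \<in> E p \<Longrightarrow> algebraic_deg_le (Qp_part (v p)) B a"
begin

sublocale Vp: padic "v p" p
  by (rule padic_at[OF prime_p])

lemma M_subset_IntR: "M \<subseteq> IntR v E"
  using a_subset by simp

lemma one_not_in_M: "1 \<notin> M"
  using I_notcarr one_imp_carrier by auto

lemma zero_in_M: "0 \<in> M"
  using additive_subgroup.zero_closed[OF ideal.axioms(1)[OF is_ideal]] by simp

lemma M_add: "f \<in> M \<Longrightarrow> g \<in> M \<Longrightarrow> f + g \<in> M"
  using additive_subgroup.a_closed[OF ideal.axioms(1)[OF is_ideal]] by simp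

lemma M_mult: "f \<in> M \<Longrightarrow> g \<in> IntR v E \<Longrightarrow> g * f \<in> M"
  using I_l_closed by simp

lemma M_prime: "f \<in> IntR v E \<Longrightarrow> g \<in> IntR v E \<Longrightarrow> f * g \<in> M \<Longrightarrow> f \<in> M \<or> g \<in> M"
  using I_prime by simp

lemma mem_M_if_power_mem: "f \<in> IntR v E \<Longrightarrow> f ^ n \<in> M \<Longrightarrow> f \<in> M"
  by (induction n) (use one_not_in_M M_prime IntR_power in auto)

lemma qpoly_nonneg_at_p: "f \<in> IntR v E \<Longrightarrow> a \<in> E p \<Longrightarrow> 0 \<le> v p (qpoly f a)"
  using prime_p by (simp add: IntR_iff)

text \<open>A positive valuation at a point of degree at most \<open>B\<close> is at least \<open>1/B\<close>.\<close>

lemma power_div_p_in_IntR: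
  assumes f: "f \<in> IntR v E" and pos: "\<And>a. a \<in> E p \<Longrightarrow> 0 < v p (qpoly f a)"
  shows "f ^ B * [:1 / of_nat p:] \<in> IntR v E"
  unfolding IntR_iff
proof (intro allI impI ballI)
  fix q a assume q: "prime q" and a: "a \<in> E q"
  interpret Vq: padic "v q" q
    using padic_at[OF q] .
  have p0: "(of_nat p :: complex) \<noteq> 0"
    using prime_p by auto
  have qpoly_eq: "qpoly (f ^ B * [:1 / of_nat p:]) a = qpoly f a ^ B * inverse (of_nat p)"
    by (simp add: qpoly_smult of_rat_divide inverse_eq_divide mult.commute)
  show "0 \<le> v q (qpoly (f ^ B * [:1 / of_nat p:]) a)"
    unfolding qpoly_eq
  proof (cases "q = p")
    case True
    with a have "ereal (1 / real B) \<le> v p (qpoly f a)"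
      using Vp.val_ge_inverse_degree[OF Vp.algebraic_deg_le_qpoly[OF E_p_algebraic] B_pos pos]
      by blast
    then have "1 \<le> ereal (real B) * v p (qpoly f a)"
      using B_pos by (cases "v p (qpoly f a)") (auto simp: field_simps)
    moreover have "v p (qpoly f a ^ B * inverse (of_nat p)) = ereal (real B) * v p (qpoly f a) + - 1"
      using p0 Vp.val_p by (simp add: Vp.val_mult Vp.val_power Vp.val_inverse)
    moreover have "0 \<le> x + - 1" if "1 \<le> x" for x :: ereal
      using that by (cases x) (auto simp: one_ereal_def)
    ultimately show "0 \<le> v q (qpoly f a ^ B * inverse (of_nat p))"
      using True by simp
  next
    case False
    then have "\<not> int q dvd int p"
      using q prime_p primes_dvd_imp_eq by auto
    then have "v q (of_nat p) = 0"
      using Vq.val_of_int_eq_0[of "int p"] by simp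
    moreover have "0 \<le> v q (qpoly f a)"
      using f q a by (simp add: IntR_iff)
    ultimately show "0 \<le> v q (qpoly f a ^ B * inverse (of_nat p))"
      using p0 by (simp add: Vq.val_mult Vq.val_power_nonneg Vq.val_inverse)
  qed
qed

lemma mem_M_if_pos_on_E_p:
  assumes "f \<in> IntR v E" "\<And>a. a \<in> E p \<Longrightarrow> 0 < v p (qpoly f a)"
  shows "f \<in> M"
proof -
  have "f ^ B = f ^ B * [:1 / of_nat p:] * [:of_nat p:]"
    using prime_p by simp
  also have "\<dots> \<in> M"
    using M_mult[OF p_in_M power_div_p_in_IntR[OF assms]] by (simp add: mult.commute)
  finally show ?thesis
    using assms(1) by (rule mem_M_if_power_mem[rotated])
qed

lemma qpoly_power_fact_minus_one_pos:
  assumes "f \<in> IntR v E" "a \<in> E p"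
  shows "0 < v p (qpoly (f * (f ^ fact (p ^ B) - 1)) a)"
proof -
  define y where "y = qpoly f a"
  have "0 \<le> v p y"
    using qpoly_nonneg_at_p[OF assms] by (simp add: y_def)
  then consider "v p y = 0" | "0 < v p y"
    by fastforce
  then have "0 < v p (y * (y ^ fact (p ^ B) - 1))"
  proof cases
    case 1
    then have "0 < v p (y ^ fact (p ^ B) - 1)"
      using Vp.power_fact_near_one[OF Vp.algebraic_deg_le_qpoly[OF E_p_algebraic[OF assms(2)]]]
      by (simp add: y_def)
    with 1 show ?thesis
      by (simp add: Vp.val_mult)
  next
    case 2
    moreover have "0 \<le> v p (y ^ fact (p ^ B) - 1)"
      using Vp.val_power_nonneg[OF \<open>0 \<le> v p y\<close>] by (intro Vp.val_diff_ge) auto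
    ultimately show ?thesis
      by (simp add: Vp.val_mult add_pos_nonneg)
  qed
  then show ?thesis
    by (simp add: y_def)
qed

lemma power_fact_minus_one_in_M:
  assumes "f \<in> IntR v E" "f \<notin> M"
  shows "f ^ fact (p ^ B) - 1 \<in> M"
proof -
  have "f ^ fact (p ^ B) - 1 \<in> IntR v E"
    using assms(1) by (intro IntR_diff IntR_power IntR_1)
  moreover have "f * (f ^ fact (p ^ B) - 1) \<in> M"
    using assms(1) calculation
    by (intro mem_M_if_pos_on_E_p IntR_mult qpoly_power_fact_minus_one_pos)
  ultimately show ?thesis
    using M_prime assms by blast
qed

lemma M_maximal: "maximalideal M (IntRing v E)"
proof (rule maximalidealI)
  fix J assume J: "ideal J (IntRing v E)" "M \<subseteq> J" "J \<subseteq> carrier (IntRing v E)"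
  show "J = M \<or> J = carrier (IntRing v E)"
  proof (cases "J = M")
    case False
    with J(2) obtain f where f: "f \<in> J" "f \<notin> M"
      by blast
    with J(3) have "f \<in> IntR v E"
      by auto
    have "f ^ fact (p ^ B) - 1 \<in> J"
      using power_fact_minus_one_in_M[OF \<open>f \<in> IntR v E\<close> f(2)] J(2) by blast
    have "f ^ fact (p ^ B) \<in> J"
      using ideal_power_mem[OF J(1) f(1)] by simp
    have "1 - f ^ fact (p ^ B) \<in> J"
      using ideal.I_l_closed[OF J(1) \<open>f ^ fact (p ^ B) - 1 \<in> J\<close>, of "[:-1:]"]
        IntR_const_int[of "-1"] by simp
    then have "(1 - f ^ fact (p ^ B)) \<oplus>\<^bsub>IntRing v E\<^esub> f ^ fact (p ^ B) \<in> J"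
      using \<open>f ^ fact (p ^ B) \<in> J\<close> by (rule additive_subgroup.a_closed[OF ideal.axioms(1)[OF J(1)]])
    then show ?thesis
      using ideal.one_imp_carrier[OF J(1)] by simp
  qed simp
qed (use is_ideal I_notcarr in auto)

lemma one_minus_prod_in_M:
  assumes "finite F" "F \<subseteq> M"
  shows "1 - (\<Prod>f\<in>F. 1 - f ^ fact (p ^ B)) \<in> M"
  using assms
proof (induction F rule: finite_induct)
  case empty
  then show ?case
    using zero_in_M by simp
next
  case (insert g F)
  define Q where "Q = (\<Prod>f\<in>F. 1 - f ^ fact (p ^ B))"
  have "Q \<in> IntR v E"
    using insert.prems M_subset_IntR unfolding Q_def by (intro IntR_prod IntR_diff IntR_power IntR_1) auto
  moreover have "g ^ fact (p ^ B) \<in> M"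
    using insert.prems ideal_power_mem[OF is_ideal] by simp
  ultimately have "Q * g ^ fact (p ^ B) \<in> M"
    by (simp add: M_mult mult.commute)
  moreover have "1 - Q \<in> M"
    using insert.IH insert.prems by (simp add: Q_def)
  moreover have "1 - (\<Prod>f\<in>insert g F. 1 - f ^ fact (p ^ B)) = (1 - Q) + Q * g ^ fact (p ^ B)"
    using insert.hyps by (simp add: Q_def algebra_simps)
  ultimately show ?case
    using M_add by presburger
qed

lemma finite_subset_common_point:
  assumes "finite F" "F \<subseteq> M"
  shows "\<exists>a\<in>E p. \<forall>f\<in>F. 0 < v p (qpoly f a)"
proof (rule ccontr)
  assume no_point: "\<not> ?thesis"
  define P where "P = (\<Prod>f\<in>F. 1 - f ^ fact (p ^ B))"
  have F_IntR: "f \<in> IntR v E" if "f \<in> F" for f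
    using that assms(2) M_subset_IntR by blast
  have "P \<in> M"
  proof (rule mem_M_if_pos_on_E_p)
    show "P \<in> IntR v E"
      unfolding P_def using F_IntR by (intro IntR_prod IntR_diff IntR_power IntR_1)
    fix a assume a: "a \<in> E p"
    then obtain g where g: "g \<in> F" "\<not> 0 < v p (qpoly g a)"
      using no_point by blast
    have nonneg: "0 \<le> v p (1 - qpoly f a ^ fact (p ^ B))" if "f \<in> F" for f
      using qpoly_nonneg_at_p[OF F_IntR[OF that] a]
      by (intro Vp.val_diff_ge Vp.val_power_nonneg) auto
    have "v p (qpoly g a) = 0"
      using g(2) qpoly_nonneg_at_p[OF F_IntR[OF g(1)] a] by simp
    then have "0 < v p (1 - qpoly g a ^ fact (p ^ B))"
      using Vp.power_fact_near_one[OF Vp.algebraic_deg_le_qpoly[OF E_p_algebraic[OF a]]]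
      by (simp add: Vp.val_diff_commute)
    moreover have "v p (qpoly P a) = (\<Sum>f\<in>F. v p (1 - qpoly f a ^ fact (p ^ B)))"
      using assms(1) by (simp add: P_def qpoly_prod Vp.val_prod)
    moreover have "\<dots> = v p (1 - qpoly g a ^ fact (p ^ B)) + (\<Sum>f\<in>F - {g}. v p (1 - qpoly f a ^ fact (p ^ B)))"
      using assms(1) g(1) by (simp add: sum.remove)
    moreover have "0 \<le> (\<Sum>f\<in>F - {g}. v p (1 - qpoly f a ^ fact (p ^ B)))"
      using nonneg by (intro sum_nonneg) auto
    ultimately show "0 < v p (qpoly P a)"
      by (simp add: add_pos_nonneg)
  qed
  then have "(1 - P) + P \<in> M"
    using one_minus_prod_in_M[OF assms] M_add unfolding P_def by blast
  then show False
    using one_not_in_M by simp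
qed

lemma pos_at_cluster_point:
  assumes \<beta>: "\<And>n. \<beta> n \<in> E p" "eventually (\<lambda>n. 0 < v p (qpoly g (\<beta> n))) sequentially"
    and r: "0 \<le> v p r" "\<And>N::real. \<exists>\<^sub>F n in sequentially. ereal N < v p (\<beta> n - r)"
  shows "0 < v p (qpoly g r)"
proof -
  obtain C :: real where C:
    "\<And>x z. 0 \<le> v p x \<Longrightarrow> 0 \<le> v p z \<Longrightarrow> ereal C + v p (x - z) \<le> v p (qpoly g x - qpoly g z)"
    using Vp.qpoly_val_diff_ge by blast
  obtain n where n: "ereal (1 / real B - C) < v p (\<beta> n - r)" "0 < v p (qpoly g (\<beta> n))"
    using frequently_ex[OF frequently_eventually_frequently[OF r(2) \<beta>(2)]] by blast
  have "\<beta> n \<in> Zbar (v p)"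
    using \<beta>(1) E_p_integral by blast
  then have "ereal C + v p (\<beta> n - r) \<le> v p (qpoly g (\<beta> n) - qpoly g r)"
    using C r(1) by (simp add: Zbar_def)
  moreover have "ereal (C + (1 / real B - C)) < ereal C + v p (\<beta> n - r)"
    using n by (intro ereal_add_less) auto
  ultimately have "ereal (1 / real B) \<le> v p (qpoly g (\<beta> n) - qpoly g r)"
    by simp
  moreover have "ereal (1 / real B) \<le> v p (qpoly g (\<beta> n))"
    using Vp.val_ge_inverse_degree[OF Vp.algebraic_deg_le_qpoly[OF E_p_algebraic[OF \<beta>(1)]] B_pos n(2)] .
  ultimately have "ereal (1 / real B) \<le> v p (qpoly g (\<beta> n) - (qpoly g (\<beta> n) - qpoly g r))"
    by (rule Vp.val_diff_ge[rotated])
  then show ?thesis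
    using B_pos by (simp add: order_less_le_trans[rotated])
qed

lemma M_eq_point_ideal_if_pos:
  assumes "\<And>f. f \<in> M \<Longrightarrow> 0 < v p (qpoly f a)"
  shows "M = {f \<in> IntR v E. 0 < v p (qpoly f a)}"
proof (intro equalityI subsetI)
  fix f assume "f \<in> {f \<in> IntR v E. 0 < v p (qpoly f a)}"
  then have f: "f \<in> IntR v E" "0 < v p (qpoly f a)"
    by auto
  show "f \<in> M"
  proof (rule ccontr)
    assume "f \<notin> M"
    then have "0 < v p (qpoly f a ^ fact (p ^ B) - 1)"
      using assms power_fact_minus_one_in_M[OF f(1)] by fastforce
    moreover have "v p (- 1 + qpoly f a ^ fact (p ^ B)) = 0"
      using Vp.val_power_pos[OF f(2)] by (subst Vp.val_add_eq_left) simp_all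
    ultimately show False
      by simp
  qed
qed (use assms M_subset_IntR in auto)

lemma M_eq_point_ideal: "\<exists>a\<in>E p. M = {f \<in> IntR v E. 0 < v p (qpoly f a)}"
proof -
  define g where "g = from_nat_into M"
  have g: "range g = M"
    unfolding g_def using countable_subset[OF subset_UNIV countable_rat_poly] zero_in_M
    by (intro range_from_nat_into) auto
  have "\<exists>a\<in>E p. \<forall>f\<in>g ` {..n}. 0 < v p (qpoly f a)" for n
    using g by (intro finite_subset_common_point) auto
  then obtain \<beta> where \<beta>: "\<And>n. \<beta> n \<in> E p" "\<And>n i. i \<le> n \<Longrightarrow> 0 < v p (qpoly (g i) (\<beta> n))"
    by (metis atMost_iff image_eqI)
  have alg: "algebraic_deg_le Vp.Qp B (\<beta> n)" and integral: "0 \<le> v p (\<beta> n)" for n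
    using \<beta>(1) E_p_algebraic E_p_integral by (auto simp: Zbar_def)
  obtain r where r: "0 \<le> v p r" "\<And>N::real. \<exists>\<^sub>F n in sequentially. ereal N < v p (\<beta> n - r)"
    using Vp.algebraic_deg_le_cluster_point[where \<beta> = \<beta>, OF alg integral] by blast
  obtain s where "v_converges (v p) (\<beta> \<circ> s) r"
    using frequently_close_imp_v_converges r(2) by blast
  then have "r \<in> E p"
    using E_p_closed \<beta>(1) r(1) unfolding closed_in_Zbar_def Zbar_def
    by (metis comp_apply mem_Collect_eq)
  moreover have "0 < v p (qpoly (g i) r)" for i
  proof (rule pos_at_cluster_point[OF \<beta>(1) _ r])
    show "eventually (\<lambda>n. 0 < v p (qpoly (g i) (\<beta> n))) sequentially"
      using eventually_ge_at_top[of i] by (rule eventually_mono) (rule \<beta>(2))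
  qed
  ultimately show ?thesis
    using M_eq_point_ideal_if_pos g by blast
qed

end

theorem mainTheorem2:
  fixes v :: "nat \<Rightarrow> complex \<Rightarrow> ereal" and E :: "nat \<Rightarrow> complex set"
    and M :: "rat poly set" and p :: nat
  assumes model: "\<forall>q. prime q \<longrightarrow> padic_closure_model q (v q)"
    and sub: "\<forall>q. prime q \<longrightarrow> E q \<subseteq> Zbar (v q)"
    and bdd: "\<forall>q. prime q \<longrightarrow> locally_bounded_at (v q) (E q)"
    and cl: "\<forall>q. prime q \<longrightarrow> closed_in_Zbar (v q) (E q)"
    and M: "primeideal M (IntRing v E)"
    and p: "prime p"
    and MZ: "{c::int. [:of_int c:] \<in> M} = {c. int p dvd c}"
  shows "maximalideal M (IntRing v E) \<and>
    (\<exists>a\<in>E p. M = {f \<in> IntR v E. 0 < v p (poly (map_poly of_rat f) a)})"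
proof -
  have "int p \<in> {c::int. [:of_int c:] \<in> M}"
    using MZ by simp
  then have p_in_M: "[:of_nat p:] \<in> M"
    by simp
  have "locally_bounded_at (v p) (E p)"
    using bdd p by blast
  then obtain B where "0 < B" "\<And>a. a \<in> E p \<Longrightarrow> algebraic_deg_le (Qp_part (v p)) B a"
    using locally_bounded_at_algebraic_deg_le by blast
  then interpret prime_ideal_above_p v E M p B
    using model M p sub cl p_in_M by (intro prime_ideal_above_p.intro prime_ideal_above_p_axioms.intro
        int_valued_polys.intro) auto
  show ?thesis
    using M_maximal M_eq_point_ideal by (simp add: qpoly_def)
qed

end
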